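(* Let $x\in\Delta\setminus\partial\Delta$. The following are equivalent: (i) $x$ is a stable equilibrium; (ii) $x\in\Gamma$ and the graph $G_x$ satisfies property $P_{G_x}$; (iii) $x\in\Gamma_{\mathcal{G}}$ for some subgraph $\mathcal{G}$ of $G$ satisfying $P_{\mathcal{G}}$.
   Context: Let $G=(\mathbb{V},E)$ be a finite graph with adjacency $\sim$ and edge set $E$. Let $a_{ij}=a_{ji}\ge0$ ($a_{ij}>0$ only if $i\sim j$), and $p_{ij}=p_{ji}\in[0,1]$ with $p_{ij}=0$ if $i\not\sim j$; assume some $a_{ij}p_{ij}>0$. Fix $h_1\in(0,1]$ and let $\Delta$ be the set of arrays $x=(x_{ij})_{i,j\in\mathbb{V}}$ with $x_{ij}=x_{ji}\ge0$, $x_{ij}=0$ if $i\not\sim j$, $\sum_{i,j}x_{ij}=1$, $\sum_{(i,j):a_{ij}p_{ij}>0}x_{ij}\ge h_1$; $x_i:=\sum_j x_{ij}$. Let $\partial\Delta$ be the set of $x\in\Delta$ for which some vertex $i$ having a neighbour $j$ with $a_{ij}p_{ij}>0$ satisfies $\sum_{j:a_{ij}p_{ij}>0}x_{ij}=0$. Let $H(x)=\sum_{(i,j):x_{ij}>0}a_{ij}p_{ij}x_{ij}^2/(x_ix_j)$, $F(x)_{ij}=x_{ij}(y_{ij}-H(x))$ where $y_{ij}=a_{ij}p_{ij}x_{ij}/(x_ix_j)$ ($y_{ij}:=0$ if $a_{ij}p_{ij}=0$; $F_{ij}=0$ if $x_{ij}=0$), and $\Gamma=\{x\in\Delta:F(x)=0\}$.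 For $x\in\Gamma\cap(\Delta\setminus\partial\Delta)$, $J(x)$ is the Jacobian matrix (indexed by pairs of edges) of the map $(x_e)_{e\in E}\mapsto(F_e(x))_{e\in E}$, where $x_{ij}=x_{ji}=x_e$ for $e=\{i,j\}$, $x_i=\sum_jx_{ij}$, and the formulas for $H$ (summing only terms with $a_{ij}p_{ij}>0$) and $F$ are regarded as smooth functions of the unconstrained variables near $x$. $x$ is a stable equilibrium iff $x\in\Gamma\cap(\Delta\setminus\partial\Delta)$ and all eigenvalues of $J(x)$ have nonpositive real part. For $x\in\Delta$, $G_x$ is the subgraph with vertex set $\mathbb{V}$ and $i,j$ adjacent iff $x_{ij}>0$. For a subgraph $\mathcal{G}$ of $G$ (vertex set $\mathbb{V}$, edges a subset of $E$) with connected components $\mathcal{C}_1,\dots,\mathcal{C}_d$, property $P_{\mathcal{G}}$ means: (1) for each $m$ and all edges $\{i,j\},\{k,l\}$ of $\mathcal{G}$ within $\mathcal{C}_m$, $a_{ij}p_{ij}=a_{kl}p_{kl}>0$; (2) each $\mathcal{C}_m$ contains at most one vertex with several neighbours in $\mathcal{G}$; (3) a vertex $i$ belongs to an edge of $\mathcal{G}$ iff $a_{ij}p_{ij}>0$ for some $j\sim i$. If $P_{\mathcal{G}}$ holds, the nucleus of a component is its unique vertex with several neighbours, chosen arbitrarily if the component has exactly two vertices, or its single vertex if isolated; $N$ is the set of nuclei; for $i\in N$, $(ap)_i:=a_{ik}p_{ik}$ for any $\mathcal{G}$-neighbour $k$ of $i$ ($:=0$ if $i$ is isolated). $\Gamma_{\mathcal{G}}$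 is the set of $q\in\Delta$ with: $G_q=\mathcal{G}$; $q_i=(ap)_i/(2\sum_{j\in N}(ap)_j)$ for all $i\in N$; and for each $i\in N$, $(q_{ij})_{j}$ over $\mathcal{G}$-neighbours $j$ of $i$ are positive numbers with sum $q_i$. *)

theory Defs
  imports "HOL-Analysis.Analysis"
begin

text \<open>Vertices form a finite type 'v; the graph G is a symmetric irreflexive
adjacency relation adj.
Subgraphs of G (with vertex set V) are symmetric relations S contained in adj.\<close>

definition vsum :: "('v::finite \<Rightarrow> 'v \<Rightarrow> real) \<Rightarrow> 'v \<Rightarrow> real" where
  "vsum x i = (\<Sum>j\<in>UNIV. x i j)"

definition Delta :: "('v::finite \<Rightarrow> 'v \<Rightarrow> bool) \<Rightarrow> ('v \<Rightarrow> 'v \<Rightarrow> real) \<Rightarrow>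
    ('v \<Rightarrow> 'v \<Rightarrow> real) \<Rightarrow> real \<Rightarrow> ('v \<Rightarrow> 'v \<Rightarrow> real) set" where
  "Delta adj a p h1 = {x. (\<forall>i j. x i j = x j i \<and> x i j \<ge> 0)
      \<and> (\<forall>i j. \<not> adj i j \<longrightarrow> x i j = 0)
      \<and> (\<Sum>(i,j)\<in>UNIV. x i j) = 1
      \<and> (\<Sum>(i,j)\<in>{(i,j). a i j * p i j > 0}. x i j) \<ge> h1}"

definition bdry :: "('v::finite \<Rightarrow> 'v \<Rightarrow> bool) \<Rightarrow> ('v \<Rightarrow> 'v \<Rightarrow> real) \<Rightarrow>
    ('v \<Rightarrow> 'v \<Rightarrow> real) \<Rightarrow> real \<Rightarrow> ('v \<Rightarrow> 'v \<Rightarrow> real) set" where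
  "bdry adj a p h1 = {x \<in> Delta adj a p h1. \<exists>i. (\<exists>j. adj i j \<and> a i j * p i j > 0)
      \<and> (\<Sum>j\<in>{j. a i j * p i j > 0}. x i j) = 0}"

definition Hfun :: "('v::finite \<Rightarrow> 'v \<Rightarrow> real) \<Rightarrow> ('v \<Rightarrow> 'v \<Rightarrow> real) \<Rightarrow>
    ('v \<Rightarrow> 'v \<Rightarrow> real) \<Rightarrow> real" where
  "Hfun a p x = (\<Sum>(i,j)\<in>{(i,j). x i j > 0}.
      a i j * p i j * (x i j)\<^sup>2 / (vsum x i * vsum x j))"

definition yfun :: "('v::finite \<Rightarrow> 'v \<Rightarrow> real) \<Rightarrow> ('v \<Rightarrow> 'v \<Rightarrow> real) \<Rightarrow>
    ('v \<Rightarrow> 'v \<Rightarrow> real) \<Rightarrow> 'v \<Rightarrow> 'v \<Rightarrow> real" where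
  "yfun a p x i j = (if a i j * p i j = 0 then 0
      else a i j * p i j * x i j / (vsum x i * vsum x j))"

definition Ffun :: "('v::finite \<Rightarrow> 'v \<Rightarrow> real) \<Rightarrow> ('v \<Rightarrow> 'v \<Rightarrow> real) \<Rightarrow>
    ('v \<Rightarrow> 'v \<Rightarrow> real) \<Rightarrow> 'v \<Rightarrow> 'v \<Rightarrow> real" where
  "Ffun a p x i j = (if x i j = 0 then 0 else x i j * (yfun a p x i j - Hfun a p x))"

definition Gamma :: "('v::finite \<Rightarrow> 'v \<Rightarrow> bool) \<Rightarrow> ('v \<Rightarrow> 'v \<Rightarrow> real) \<Rightarrow>
    ('v \<Rightarrow> 'v \<Rightarrow> real) \<Rightarrow> real \<Rightarrow> ('v \<Rightarrow> 'v \<Rightarrow> real) set" where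
  "Gamma adj a p h1 = {x \<in> Delta adj a p h1. \<forall>i j. Ffun a p x i j = 0}"

definition edges :: "('v \<Rightarrow> 'v \<Rightarrow> bool) \<Rightarrow> 'v set set" where
  "edges adj = {{i, j} | i j. adj i j}"

definition edge_ends :: "('v \<Rightarrow> 'v \<Rightarrow> bool) \<Rightarrow> 'v set \<Rightarrow> 'v \<times> 'v" where
  "edge_ends adj e = (SOME (i, j). adj i j \<and> e = {i, j})"

definition arr_of :: "('v \<Rightarrow> 'v \<Rightarrow> bool) \<Rightarrow> ('v set \<Rightarrow> real) \<Rightarrow> 'v \<Rightarrow> 'v \<Rightarrow> real" where
  "arr_of adj xi i j = (if adj i j then xi {i, j} else 0)"

definition evec :: "('v \<Rightarrow> 'v \<Rightarrow> bool) \<Rightarrow> ('v \<Rightarrow> 'v \<Rightarrow> real) \<Rightarrow> 'v set \<Rightarrow> real" where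
  "evec adj x e = (case edge_ends adj e of (i, j) \<Rightarrow> x i j)"

text \<open>Smooth versions: H summing only terms with a_ij p_ij > 0.\<close>
definition Hsm :: "('v::finite \<Rightarrow> 'v \<Rightarrow> real) \<Rightarrow> ('v \<Rightarrow> 'v \<Rightarrow> real) \<Rightarrow>
    ('v \<Rightarrow> 'v \<Rightarrow> real) \<Rightarrow> real" where
  "Hsm a p x = (\<Sum>(i,j)\<in>{(i,j). a i j * p i j > 0}.
      a i j * p i j * (x i j)\<^sup>2 / (vsum x i * vsum x j))"

definition Fsm :: "('v::finite \<Rightarrow> 'v \<Rightarrow> bool) \<Rightarrow> ('v \<Rightarrow> 'v \<Rightarrow> real) \<Rightarrow>
    ('v \<Rightarrow> 'v \<Rightarrow> real) \<Rightarrow> ('v set \<Rightarrow> real) \<Rightarrow> 'v set \<Rightarrow> real" where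
  "Fsm adj a p xi e = (case edge_ends adj e of (i, j) \<Rightarrow>
      arr_of adj xi i j * (yfun a p (arr_of adj xi) i j - Hsm a p (arr_of adj xi)))"

definition jac :: "('v::finite \<Rightarrow> 'v \<Rightarrow> bool) \<Rightarrow> ('v \<Rightarrow> 'v \<Rightarrow> real) \<Rightarrow>
    ('v \<Rightarrow> 'v \<Rightarrow> real) \<Rightarrow> ('v \<Rightarrow> 'v \<Rightarrow> real) \<Rightarrow> 'v set \<Rightarrow> 'v set \<Rightarrow> real" where
  "jac adj a p x e f = deriv (\<lambda>t. Fsm adj a p ((evec adj x)(f := t)) e) (evec adj x f)"

definition jac_eigenvalue :: "('v::finite \<Rightarrow> 'v \<Rightarrow> bool) \<Rightarrow> ('v \<Rightarrow> 'v \<Rightarrow> real) \<Rightarrow>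
    ('v \<Rightarrow> 'v \<Rightarrow> real) \<Rightarrow> ('v \<Rightarrow> 'v \<Rightarrow> real) \<Rightarrow> complex \<Rightarrow> bool" where
  "jac_eigenvalue adj a p x mu = (\<exists>v :: 'v set \<Rightarrow> complex.
      (\<exists>e\<in>edges adj. v e \<noteq> 0) \<and>
      (\<forall>e\<in>edges adj. (\<Sum>f\<in>edges adj. complex_of_real (jac adj a p x e f) * v f) = mu * v e))"

definition stable_eq :: "('v::finite \<Rightarrow> 'v \<Rightarrow> bool) \<Rightarrow> ('v \<Rightarrow> 'v \<Rightarrow> real) \<Rightarrow>
    ('v \<Rightarrow> 'v \<Rightarrow> real) \<Rightarrow> real \<Rightarrow> ('v \<Rightarrow> 'v \<Rightarrow> real) \<Rightarrow> bool" where
  "stable_eq adj a p h1 x = (x \<in> Gamma adj a p h1 \<and> x \<notin> bdry adj a p h1 \<and>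
      (\<forall>mu. jac_eigenvalue adj a p x mu \<longrightarrow> Re mu \<le> 0))"

definition subgraph :: "('v \<Rightarrow> 'v \<Rightarrow> bool) \<Rightarrow> ('v \<Rightarrow> 'v \<Rightarrow> bool) \<Rightarrow> bool" where
  "subgraph adj S = ((\<forall>i j. S i j \<longrightarrow> S j i) \<and> (\<forall>i j. S i j \<longrightarrow> adj i j))"

definition graph_of :: "('v \<Rightarrow> 'v \<Rightarrow> real) \<Rightarrow> 'v \<Rightarrow> 'v \<Rightarrow> bool" where
  "graph_of x i j = (x i j > 0)"

definition ndeg :: "('v::finite \<Rightarrow> 'v \<Rightarrow> bool) \<Rightarrow> 'v \<Rightarrow> nat" where
  "ndeg S i = card {j. S i j}"

text \<open>Same connected component of S: S^** (S symmetric).\<close>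
definition propP :: "('v::finite \<Rightarrow> 'v \<Rightarrow> bool) \<Rightarrow> ('v \<Rightarrow> 'v \<Rightarrow> real) \<Rightarrow>
    ('v \<Rightarrow> 'v \<Rightarrow> real) \<Rightarrow> ('v \<Rightarrow> 'v \<Rightarrow> bool) \<Rightarrow> bool" where
  "propP adj a p S =
     ((\<forall>i j k l. S i j \<longrightarrow> S k l \<longrightarrow> S\<^sup>*\<^sup>* i k \<longrightarrow>
          a i j * p i j = a k l * p k l \<and> a i j * p i j > 0)
    \<and> (\<forall>i k. S\<^sup>*\<^sup>* i k \<longrightarrow> ndeg S i \<ge> 2 \<longrightarrow> ndeg S k \<ge> 2 \<longrightarrow> i = k)
    \<and> (\<forall>i. (\<exists>j. S i j) \<longleftrightarrow> (\<exists>j. adj i j \<and> a i j * p i j > 0)))"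

text \<open>N is a valid choice of nuclei: exactly one per component; it is the vertex
with several neighbours if the component has one (otherwise the component is an
isolated vertex or a single edge and any of its vertices may be chosen).\<close>
definition is_nuclei :: "('v::finite \<Rightarrow> 'v \<Rightarrow> bool) \<Rightarrow> 'v set \<Rightarrow> bool" where
  "is_nuclei S N = ((\<forall>i. \<exists>!n. n \<in> N \<and> S\<^sup>*\<^sup>* i n)
     \<and> (\<forall>n\<in>N. ndeg S n \<ge> 2 \<or> (\<forall>k. S\<^sup>*\<^sup>* n k \<longrightarrow> ndeg S k \<le> 1)))"

definition ap_nuc :: "('v \<Rightarrow> 'v \<Rightarrow> real) \<Rightarrow> ('v \<Rightarrow> 'v \<Rightarrow> real) \<Rightarrow>
    ('v \<Rightarrow> 'v \<Rightarrow> bool) \<Rightarrow> 'v \<Rightarrow> real" where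
  "ap_nuc a p S i = (if \<exists>k. S i k then a i (SOME k. S i k) * p i (SOME k. S i k) else 0)"

definition GammaG :: "('v::finite \<Rightarrow> 'v \<Rightarrow> bool) \<Rightarrow> ('v \<Rightarrow> 'v \<Rightarrow> real) \<Rightarrow>
    ('v \<Rightarrow> 'v \<Rightarrow> real) \<Rightarrow> real \<Rightarrow> ('v \<Rightarrow> 'v \<Rightarrow> bool) \<Rightarrow> 'v set \<Rightarrow>
    ('v \<Rightarrow> 'v \<Rightarrow> real) set" where
  "GammaG adj a p h1 S N = {q \<in> Delta adj a p h1.
      graph_of q = S
    \<and> (\<forall>i\<in>N. vsum q i = ap_nuc a p S i / (2 * (\<Sum>j\<in>N. ap_nuc a p S j)))
    \<and> (\<forall>i\<in>N. (\<forall>j. S i j \<longrightarrow> q i j > 0) \<and> (\<Sum>j\<in>{j. S i j}. q i j) = vsum q i)}"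

end

theory Submission
  imports Defs
begin

text \<open>At an interior equilibrium every positive edge satisfies a_ij p_ij = H x_i x_j / x_ij.
  The Jacobian acts as -H on the edges carrying no mass; on the support it equals H (I - D W)
  with D = diag(x_e) and W_ef the sum of 1/x_v over the common vertices of e and f, which is
  similar to a symmetric matrix. If two adjacent vertices both have several neighbours, a test
  vector on two adjacent edges has Rayleigh quotient below 1, so J has a positive eigenvalue.
  If instead every component of G_x is a star, the eigen-equation collapses on each star and
  every eigenvalue is -H or 0. On a star a_ij p_ij = H x_n for the centre n; since every edge
  joins a nucleus to a non-nucleus, the nuclei carry half of the mass, which gives the values
  of x_n prescribed by Gamma_G; conversely these values force y_ij = H on every edge.\<close>

lemma linear_coeff_zero_if_quadratic_nonneg:
  fixes W K :: real
  assumes "\<And>t. 0 \<le> 2*t*W + t\<^sup>2*K" and "W \<ge> 0"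
  shows "W = 0"
proof (rule ccontr)
  assume "W \<noteq> 0"
  with assms(2) have W: "W > 0" by simp
  define k where "k = \<bar>K\<bar> + 1"
  have k: "k > 0" "K \<le> k" unfolding k_def by auto
  have "0 \<le> 2*(-W/k)*W + (-W/k)\<^sup>2*K" by (rule assms(1))
  also have "\<dots> = W\<^sup>2 * (K - 2*k) / k\<^sup>2" using k by (simp add: field_simps power2_eq_square)
  also have "\<dots> < 0" using W k by (intro divide_neg_pos mult_pos_neg) (auto simp: k_def)
  finally show False by simp
qed

definition quad_form :: "('n::finite \<Rightarrow> 'n \<Rightarrow> real) \<Rightarrow> ('n \<Rightarrow> real) \<Rightarrow> real" where
  "quad_form Q u = (\<Sum>i\<in>UNIV. \<Sum>j\<in>UNIV. Q i j * u i * u j)"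

definition sum_sq :: "('n::finite \<Rightarrow> real) \<Rightarrow> real" where
  "sum_sq u = (\<Sum>i\<in>UNIV. (u i)\<^sup>2)"

lemma sum_sq_nonneg: "sum_sq u \<ge> 0"
  unfolding sum_sq_def by (simp add: sum_nonneg)

lemma sum_sq_eq_0_iff: "sum_sq u = 0 \<longleftrightarrow> (\<forall>i. u i = 0)"
  unfolding sum_sq_def by (simp add: sum_nonneg_eq_0_iff)

lemma sum_sq_add_scaled:
  "sum_sq (\<lambda>i. u i + t * w i) = sum_sq u + 2*t*(\<Sum>i\<in>UNIV. u i * w i) + t\<^sup>2 * sum_sq w"
  unfolding sum_sq_def
  by (simp add: power2_eq_square algebra_simps sum.distrib sum_distrib_left)

lemma quad_form_add_scaled:
  assumes "\<And>i j. Q i j = Q j i"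
  shows "quad_form Q (\<lambda>i. u i + t * w i)
       = quad_form Q u + 2*t*(\<Sum>i\<in>UNIV. (\<Sum>j\<in>UNIV. Q i j * u j) * w i) + t\<^sup>2 * quad_form Q w"
proof -
  have swap: "(\<Sum>i\<in>UNIV. \<Sum>j\<in>UNIV. Q i j * w i * u j) = (\<Sum>i\<in>UNIV. (\<Sum>j\<in>UNIV. Q i j * u j) * w i)"
    by (simp add: sum_distrib_left sum_distrib_right mult_ac)
  have swap': "(\<Sum>i\<in>UNIV. \<Sum>j\<in>UNIV. Q i j * u i * w j) = (\<Sum>i\<in>UNIV. (\<Sum>j\<in>UNIV. Q i j * u j) * w i)"
    by (subst sum.swap) (simp add: sum_distrib_left sum_distrib_right assms mult_ac)
  have "quad_form Q (\<lambda>i. u i + t * w i) = (\<Sum>i\<in>UNIV. \<Sum>j\<in>UNIV. Q i j * u i * u j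
      + t * (Q i j * u i * w j) + t * (Q i j * w i * u j) + t\<^sup>2 * (Q i j * w i * w j))"
    unfolding quad_form_def by (intro sum.cong refl) (simp add: algebra_simps power2_eq_square)
  also have "\<dots> = quad_form Q u + 2*t*(\<Sum>i\<in>UNIV. (\<Sum>j\<in>UNIV. Q i j * u j) * w i) + t\<^sup>2 * quad_form Q w"
    unfolding quad_form_def sum.distrib sum_distrib_left[symmetric] swap swap' by simp
  finally show ?thesis .
qed

text \<open>Perturbing a minimiser z of the Rayleigh quotient in the direction of the residual
  w = Qz - \<lambda>z changes the quotient's numerator by 2t|w|^2 + O(t^2); minimality forces w = 0.\<close>
lemma eigenvector_if_minimises_quad_form:
  assumes Q_sym: "\<And>i j. Q i j = Q j i"
    and lower: "\<And>u. lam * sum_sq u \<le> quad_form Q u"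
    and attained: "quad_form Q z = lam * sum_sq z"
  shows "(\<Sum>j\<in>UNIV. Q i j * z j) = lam * z i"
proof -
  define w where "w i = (\<Sum>j\<in>UNIV. Q i j * z j) - lam * z i" for i
  define K where "K = quad_form Q w - lam * sum_sq w"
  have "(\<Sum>i\<in>UNIV. (\<Sum>j\<in>UNIV. Q i j * z j) * w i) = sum_sq w + lam * (\<Sum>i\<in>UNIV. z i * w i)"
    unfolding sum_sq_def w_def
    by (simp add: power2_eq_square algebra_simps sum.distrib sum_distrib_left sum_subtractf)
  then have "0 \<le> 2*t* sum_sq w + t\<^sup>2*K" for t
    using lower[of "\<lambda>i. z i + t * w i"] attained
    unfolding quad_form_add_scaled[OF Q_sym] sum_sq_add_scaled K_def
    by (simp add: algebra_simps)
  then have "sum_sq w = 0"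
    by (rule linear_coeff_zero_if_quadratic_nonneg) (rule sum_sq_nonneg)
  then show ?thesis by (simp add: sum_sq_eq_0_iff w_def)
qed

lemma quad_form_attains_minimal_ratio:
  fixes Q :: "'n::finite \<Rightarrow> 'n \<Rightarrow> real"
  shows "\<exists>z lam. (\<exists>i. z i \<noteq> 0) \<and> (\<forall>u. lam * sum_sq u \<le> quad_form Q u)
    \<and> quad_form Q z = lam * sum_sq z"
proof -
  define f where "f u = quad_form Q (\<lambda>i. u $ i)" for u :: "real^'n"
  have norm_sq: "(norm u)\<^sup>2 = sum_sq (\<lambda>i. u $ i)" for u :: "real^'n"
    unfolding norm_vec_def L2_set_def sum_sq_def by (subst real_sqrt_pow2) (auto intro: sum_nonneg)
  have "continuous_on (sphere 0 1) f"
    unfolding f_def quad_form_def by (intro continuous_intros)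
  moreover have "sphere (0::real^'n) 1 \<noteq> {}"
    using vector_choose_size[of 1] by auto
  ultimately obtain z where z: "z \<in> sphere 0 1" and min: "\<And>y. y \<in> sphere 0 1 \<Longrightarrow> f z \<le> f y"
    using continuous_attains_inf[OF compact_sphere] by blast
  have z1: "sum_sq (\<lambda>i. z $ i) = 1" using z norm_sq[of z] by simp
  have scale: "f (r *\<^sub>R u) = r\<^sup>2 * f u" for r u
    unfolding f_def quad_form_def by (simp add: sum_distrib_left algebra_simps power2_eq_square)
  have "f z * sum_sq u \<le> quad_form Q u" for u
  proof (cases "\<forall>i. u i = 0")
    case True
    then show ?thesis by (simp add: quad_form_def sum_sq_def)
  next
    case False
    define v where "v = (\<chi> i. u i)"
    have s: "norm v > 0" using False by (auto simp: v_def vec_eq_iff)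
    have "f z \<le> f ((1 / norm v) *\<^sub>R v)" using s by (intro min) simp
    also have "\<dots> = quad_form Q u / (norm v)\<^sup>2"
      using scale[of "1 / norm v" v] by (simp add: v_def f_def power_divide)
    finally have "f z \<le> quad_form Q u / sum_sq u" using norm_sq[of v] by (simp add: v_def)
    moreover have "sum_sq u = (norm v)\<^sup>2" using norm_sq[of v] by (simp add: v_def)
    then have "sum_sq u > 0" using s by simp
    ultimately show ?thesis by (simp add: pos_le_divide_eq)
  qed
  moreover have "\<exists>i. z $ i \<noteq> 0"
    using z1 sum_sq_eq_0_iff[of "\<lambda>i. z $ i"] by (metis zero_neq_one)
  ultimately show ?thesis using z1
    by (intro exI[of _ "\<lambda>i. z $ i"] exI[of _ "f z"]) (simp add: f_def)
qed

lemma eigenvalue_below_if_quad_form_below: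
  fixes Q :: "'n::finite \<Rightarrow> 'n \<Rightarrow> real"
  assumes Q_sym: "\<And>i j. Q i j = Q j i" and below: "quad_form Q z < c * sum_sq z"
  obtains w lam where "\<exists>i. w i \<noteq> 0" "lam < c" "\<And>i. (\<Sum>j\<in>UNIV. Q i j * w j) = lam * w i"
proof -
  obtain w lam where w: "\<exists>i. w i \<noteq> 0" and lower: "\<And>u. lam * sum_sq u \<le> quad_form Q u"
    and attained: "quad_form Q w = lam * sum_sq w"
    using quad_form_attains_minimal_ratio[of Q] by auto
  have "\<not> (\<forall>i. z i = 0)"
  proof
    assume "\<forall>i. z i = 0"
    then show False using below by (simp add: quad_form_def sum_sq_def)
  qed
  then have "sum_sq z \<noteq> 0" by (simp add: sum_sq_eq_0_iff)
  then have "sum_sq z > 0" using sum_sq_nonneg[of z] by linarith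
  moreover have "lam * sum_sq z < c * sum_sq z" using lower[of z] below by simp
  ultimately have "lam < c" by simp
  with w show ?thesis
    by (rule that) (rule eigenvector_if_minimises_quad_form[OF Q_sym lower attained])
qed

definition unique_hub :: "('v::finite \<Rightarrow> 'v \<Rightarrow> bool) \<Rightarrow> bool" where
  "unique_hub S \<longleftrightarrow> (\<forall>i k. S\<^sup>*\<^sup>* i k \<longrightarrow> 2 \<le> ndeg S i \<longrightarrow> 2 \<le> ndeg S k \<longrightarrow> i = k)"

lemma unique_hub_if_propP: "propP adj a p S \<Longrightarrow> unique_hub S"
  unfolding propP_def unique_hub_def by blast

lemma ap_pos_if_propP: "propP adj a p S \<Longrightarrow> S i j \<Longrightarrow> a i j * p i j > 0"
  unfolding propP_def by blast

lemma neighbours_if_ndeg_le_1: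
  fixes S :: "'v::finite \<Rightarrow> 'v \<Rightarrow> bool"
  assumes "ndeg S l \<le> 1" "S l n"
  shows "{m. S l m} = {n}"
  using assms card_le_Suc0_iff_eq[of "{m. S l m}"] unfolding ndeg_def by auto

lemma ndeg_ge_2_if_two_neighbours:
  fixes S :: "'v::finite \<Rightarrow> 'v \<Rightarrow> bool"
  assumes "S n l" "S n l'" "l \<noteq> l'"
  shows "2 \<le> ndeg S n"
proof -
  have "card {l, l'} \<le> card {m. S n m}" using assms by (intro card_mono) auto
  then show ?thesis using assms unfolding ndeg_def by simp
qed

lemma other_neighbour_if_ndeg_ge_2:
  fixes S :: "'v::finite \<Rightarrow> 'v \<Rightarrow> bool"
  assumes "2 \<le> ndeg S n"
  obtains l' where "S n l'" "l' \<noteq> l"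
proof -
  have "\<not> {m. S n m} \<subseteq> {l}"
    using assms card_mono[of "{l}" "{m. S n m}"] unfolding ndeg_def by auto
  then show ?thesis using that by blast
qed

lemma rtranclp_closed:
  assumes "\<And>w w'. w \<in> C \<Longrightarrow> S w w' \<Longrightarrow> w' \<in> C" "c \<in> C" "S\<^sup>*\<^sup>* c w"
  shows "w \<in> C"
  using assms(3) by induction (use assms(1,2) in blast)+

lemma component_of_isolated_edge:
  fixes S :: "'v::finite \<Rightarrow> 'v \<Rightarrow> bool"
  assumes "symp S" "S i j" "ndeg S i \<le> 1" "ndeg S j \<le> 1" "S\<^sup>*\<^sup>* i k"
  shows "k \<in> {i, j}"
proof (rule rtranclp_closed[OF _ _ assms(5)])
  have "{m. S i m} = {j}" "{m. S j m} = {i}"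
    using neighbours_if_ndeg_le_1 assms(2-4) sympD[OF assms(1)] by blast+
  then show "w' \<in> {i, j}" if "w \<in> {i, j}" "S w w'" for w w' using that by auto
qed simp

lemma unique_hub_edge_has_leaf:
  assumes "unique_hub S" "S n l" "n \<noteq> l"
  shows "ndeg S n \<le> 1 \<or> ndeg S l \<le> 1"
proof (rule ccontr)
  assume "\<not> ?thesis"
  then have "2 \<le> ndeg S n" "2 \<le> ndeg S l" by auto
  with assms show False unfolding unique_hub_def by (meson r_into_rtranclp)
qed

lemma unique_hub_sibling_leaf:
  fixes S :: "'v::finite \<Rightarrow> 'v \<Rightarrow> bool"
  assumes "symp S" "irreflp S" "unique_hub S" "{m. S l m} = {n}" "S n l'"
  shows "{m. S l' m} = {n}"
proof (cases "l' = l")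
  case False
  have "S n l" using assms(1,4) by (auto dest: sympD)
  then have "2 \<le> ndeg S n" using ndeg_ge_2_if_two_neighbours assms(5) False by metis
  moreover have "n \<noteq> l'" using assms(2,5) by (auto dest: irreflpD)
  ultimately have "ndeg S l' \<le> 1" using unique_hub_edge_has_leaf[OF assms(3,5)] by linarith
  then show ?thesis using neighbours_if_ndeg_le_1 assms(1,5) by (metis sympD)
qed (use assms(4) in simp)

text \<open>A hub's neighbours are leaves, so its component is a star and contains no second hub.\<close>
lemma unique_hub_if_no_adjacent_hubs:
  fixes S :: "'v::finite \<Rightarrow> 'v \<Rightarrow> bool"
  assumes "symp S" and no_adj: "\<And>u w. S u w \<Longrightarrow> 2 \<le> ndeg S u \<Longrightarrow> 2 \<le> ndeg S w \<Longrightarrow> False"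
  shows "unique_hub S"
  unfolding unique_hub_def
proof (intro allI impI)
  fix i k assume ik: "S\<^sup>*\<^sup>* i k" and hi: "2 \<le> ndeg S i" and hk: "2 \<le> ndeg S k"
  have "w = i" if "S i m" "S m w" for m w
  proof -
    have "ndeg S m \<le> 1" using no_adj[OF that(1) hi] by (cases "2 \<le> ndeg S m") auto
    then show ?thesis
      using neighbours_if_ndeg_le_1 that sympD[OF assms(1)] by blast
  qed
  then have "k \<in> insert i {m. S i m}"
    by (intro rtranclp_closed[OF _ _ ik]) auto
  then show "i = k" using no_adj[of i k] hi hk by auto
qed

lemma unique_hub_edges_in_component:
  fixes S :: "'v::finite \<Rightarrow> 'v \<Rightarrow> bool"
  assumes "symp S" "irreflp S" "unique_hub S" "S i j" "S k l" "S\<^sup>*\<^sup>* i k"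
  shows "{k, l} = {i, j} \<or> (\<exists>u \<in> {i, j} \<inter> {k, l}. 2 \<le> ndeg S u)"
proof (cases "\<exists>u \<in> {i, j}. 2 \<le> ndeg S u")
  case True
  then obtain u where u: "u \<in> {i, j}" "2 \<le> ndeg S u" by blast
  have sym: "S\<^sup>*\<^sup>* y z \<Longrightarrow> S\<^sup>*\<^sup>* z y" for y z by (rule sympD[OF symp_rtranclp[OF assms(1)]])
  have "S\<^sup>*\<^sup>* u i" using u assms(1,4) by (auto dest: sympD)
  then have uk: "S\<^sup>*\<^sup>* u k" using assms(6) by simp
  show ?thesis
  proof (cases "\<exists>u' \<in> {k, l}. 2 \<le> ndeg S u'")
    case True
    then obtain u' where u': "u' \<in> {k, l}" "2 \<le> ndeg S u'" by blast
    have "S\<^sup>*\<^sup>* k u'" using u' assms(5) by auto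
    then have "u = u'" using uk u u' assms(3) unfolding unique_hub_def by (meson rtranclp_trans)
    then show ?thesis using u u' by auto
  next
    case False
    then have "u \<in> {k, l}"
      using component_of_isolated_edge[OF assms(1,5)] sym[OF uk] by auto
    then show ?thesis using u by auto
  qed
next
  case False
  have "k \<in> {i, j}" "l \<in> {i, j}"
    using component_of_isolated_edge[OF assms(1,4)] False assms(5,6)
      by (auto intro: rtranclp.rtrancl_into_rtrancl)
  moreover have "k \<noteq> l" using assms(2,5) by (auto dest: irreflpD)
  ultimately show ?thesis by auto
qed

lemma nucleus_of_edge:
  fixes S :: "'v::finite \<Rightarrow> 'v \<Rightarrow> bool"
  assumes "symp S" "irreflp S" "unique_hub S" "is_nuclei S N" "S i j" "n \<in> N" "S\<^sup>*\<^sup>* i n"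
  shows "(n = i \<and> ndeg S j \<le> 1) \<or> (n = j \<and> ndeg S i \<le> 1)"
proof -
  have sym: "S\<^sup>*\<^sup>* y z \<Longrightarrow> S\<^sup>*\<^sup>* z y" for y z by (rule sympD[OF symp_rtranclp[OF assms(1)]])
  have ij: "i \<noteq> j" using assms(2,5) by (auto dest: irreflpD)
  have jn: "S\<^sup>*\<^sup>* j n" using assms(1,5,7) by (meson converse_rtranclp_into_rtranclp sympD)
  consider "2 \<le> ndeg S n" | "\<forall>k. S\<^sup>*\<^sup>* n k \<longrightarrow> ndeg S k \<le> 1"
    using assms(4,6) unfolding is_nuclei_def by fastforce
  then show ?thesis
  proof cases
    case 1
    then have "ndeg S i \<le> 1 \<or> i = n" "ndeg S j \<le> 1 \<or> j = n"
      using assms(3,7) jn unfolding unique_hub_def by fastforce+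
    moreover have "ndeg S i \<le> 1 \<or> ndeg S j \<le> 1"
      using unique_hub_edge_has_leaf[OF assms(3,5) ij] .
    moreover have "n \<in> {i, j}" if "ndeg S i \<le> 1" "ndeg S j \<le> 1"
      using component_of_isolated_edge[OF assms(1,5) that assms(7)] .
    ultimately show ?thesis using 1 ij by fastforce
  next
    case 2
    then have "ndeg S i \<le> 1" "ndeg S j \<le> 1" using sym assms(7) jn by blast+
    moreover from this have "n \<in> {i, j}"
      using component_of_isolated_edge[OF assms(1,5)] assms(7) by blast
    ultimately show ?thesis by auto
  qed
qed

lemma nuclei_exist:
  fixes S :: "'v::finite \<Rightarrow> 'v \<Rightarrow> bool"
  assumes "symp S"
  obtains N where "is_nuclei S N"
proof -
  define good where "good i k \<longleftrightarrow> S\<^sup>*\<^sup>* i k \<and> (2 \<le> ndeg S k \<or> (\<forall>k'. S\<^sup>*\<^sup>* i k' \<longrightarrow> ndeg S k' \<le> 1))"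
    for i k
  define nuc where "nuc i = (SOME k. good i k)" for i
  have sym: "S\<^sup>*\<^sup>* y z \<Longrightarrow> S\<^sup>*\<^sup>* z y" for y z by (rule sympD[OF symp_rtranclp[OF assms]])
  have good_nuc: "good i (nuc i)" for i
  proof -
    have "\<exists>k. good i k"
    proof (cases "\<exists>k. S\<^sup>*\<^sup>* i k \<and> 2 \<le> ndeg S k")
      case False
      then have "good i i" unfolding good_def by auto
      then show ?thesis ..
    qed (auto simp: good_def)
    then show ?thesis unfolding nuc_def by (rule someI_ex)
  qed
  have same_nuc: "nuc i = nuc j" if "S\<^sup>*\<^sup>* i j" for i j
  proof -
    have "S\<^sup>*\<^sup>* i k \<longleftrightarrow> S\<^sup>*\<^sup>* j k" for k using that sym by (meson rtranclp_trans)
    then have "good i = good j" unfolding good_def by (intro ext) simp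
    then show ?thesis unfolding nuc_def by simp
  qed
  have "is_nuclei S (range nuc)"
    unfolding is_nuclei_def
  proof (intro conjI allI ballI)
    fix i
    show "\<exists>!n. n \<in> range nuc \<and> S\<^sup>*\<^sup>* i n"
    proof (rule ex1I[of _ "nuc i"])
      show "nuc i \<in> range nuc \<and> S\<^sup>*\<^sup>* i (nuc i)" using good_nuc unfolding good_def by blast
    next
      fix n assume n: "n \<in> range nuc \<and> S\<^sup>*\<^sup>* i n"
      then obtain m where m: "n = nuc m" by blast
      then have "S\<^sup>*\<^sup>* m n" using good_nuc[of m] unfolding good_def by simp
      then have "S\<^sup>*\<^sup>* i m" using n sym by (meson rtranclp_trans)
      then show "n = nuc i" using same_nuc m by simp
    qed
  next
    fix n assume "n \<in> range nuc"
    then obtain m where "n = nuc m" by blast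
    then have "S\<^sup>*\<^sup>* m n" "2 \<le> ndeg S n \<or> (\<forall>k. S\<^sup>*\<^sup>* m k \<longrightarrow> ndeg S k \<le> 1)"
      using good_nuc[of m] unfolding good_def by auto
    then show "2 \<le> ndeg S n \<or> (\<forall>k. S\<^sup>*\<^sup>* n k \<longrightarrow> ndeg S k \<le> 1)" by (meson rtranclp_trans)
  qed
  then show ?thesis by (rule that)
qed

lemma sum_over_pairs:
  "(\<Sum>(i, j)\<in>{(i, j). P i j}. g i j)
     = (\<Sum>i\<in>(UNIV::'v::finite set). \<Sum>j\<in>(UNIV::'v set). if P i j then g i j else 0)"
proof -
  have e: "{(i, j). P i j} = {z\<in>UNIV. case_prod P z}" by auto
  have "(\<Sum>(i, j)\<in>{(i, j). P i j}. g i j) = (\<Sum>z\<in>UNIV. if case_prod P z then case_prod g z else 0)"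
    unfolding e by (subst sum.inter_filter) (simp_all add: prod.case_eq_if)
  also have "\<dots> = (\<Sum>(i, j)\<in>UNIV \<times> UNIV. if P i j then g i j else 0)"
    unfolding UNIV_Times_UNIV by (intro sum.cong refl) (auto split: prod.splits)
  also have "\<dots> = (\<Sum>i\<in>UNIV. \<Sum>j\<in>UNIV. if P i j then g i j else 0)"
    by (rule sum.cartesian_product[symmetric])
  finally show ?thesis .
qed

lemma sum_UNIV_two:
  assumes "e1 \<noteq> e2" "\<And>g. g \<noteq> e1 \<Longrightarrow> g \<noteq> e2 \<Longrightarrow> F g = 0"
  shows "(\<Sum>g\<in>(UNIV::'a::finite set). F g) = F e1 + F e2"
proof -
  have "(\<Sum>g\<in>(UNIV::'a set). F g) = (\<Sum>g\<in>{e1, e2}. F g)"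
    by (rule sum.mono_neutral_right) (use assms in auto)
  then show ?thesis using assms by simp
qed

locale interior_point =
  fixes adj :: "'v::finite \<Rightarrow> 'v \<Rightarrow> bool"
    and a p x :: "'v \<Rightarrow> 'v \<Rightarrow> real" and h1 :: real
  assumes adj_sym: "\<And>i j. adj i j \<Longrightarrow> adj j i"
    and adj_irrefl: "\<And>i. \<not> adj i i"
    and a_sym: "\<And>i j. a i j = a j i" and a_nonneg: "\<And>i j. a i j \<ge> 0"
    and p_sym: "\<And>i j. p i j = p j i" and p_nonneg: "\<And>i j. p i j \<ge> 0"
    and p_adj: "\<And>i j. \<not> adj i j \<Longrightarrow> p i j = 0"
    and h1_pos: "0 < h1"
    and x_Delta: "x \<in> Delta adj a p h1" and x_not_bdry: "x \<notin> bdry adj a p h1"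
begin

abbreviation "ap i j \<equiv> a i j * p i j"
abbreviation "xv \<equiv> vsum x"
abbreviation "H \<equiv> Hfun a p x"

lemma ap_sym: "ap i j = ap j i" using a_sym p_sym by simp
lemma ap_nonneg: "ap i j \<ge> 0" using a_nonneg p_nonneg by simp
lemma adj_if_ap_pos: "ap i j > 0 \<Longrightarrow> adj i j" using p_adj by fastforce

lemma x_sym: "x i j = x j i" using x_Delta unfolding Delta_def by auto
lemma x_nonneg: "x i j \<ge> 0" using x_Delta unfolding Delta_def by auto
lemma x_not_adj: "\<not> adj i j \<Longrightarrow> x i j = 0" using x_Delta unfolding Delta_def by auto
lemma x_diag: "x i i = 0" using x_not_adj adj_irrefl by blast
lemma adj_if_x_pos: "x i j > 0 \<Longrightarrow> adj i j" using x_not_adj by force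
lemma x_pos_iff: "x i j > 0 \<longleftrightarrow> x i j \<noteq> 0" using x_nonneg[of i j] by linarith

lemma x_total: "(\<Sum>i\<in>UNIV. \<Sum>j\<in>UNIV. x i j) = 1"
  using x_Delta sum_over_pairs[where P="\<lambda>_ _. True" and g=x] unfolding Delta_def by simp

lemma xv_eq: "xv i = (\<Sum>j\<in>UNIV. x i j)" by (simp add: vsum_def)

lemma xv_total: "(\<Sum>i\<in>UNIV. xv i) = 1" using x_total by (simp add: xv_eq)

lemma x_le_xv: "x i j \<le> xv i"
  unfolding xv_eq by (rule member_le_sum) (auto simp: x_nonneg)

lemma xv_nonneg: "xv i \<ge> 0" unfolding xv_eq by (simp add: sum_nonneg x_nonneg)

lemma xv_pos_if_x_pos: "x i j > 0 \<Longrightarrow> xv i > 0" using x_le_xv[of i j] by simp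

lemma xv_pos_if_x_pos': "x i j > 0 \<Longrightarrow> xv j > 0" using xv_pos_if_x_pos[of j i] x_sym by simp

lemma xv_pos_if_ap_pos:
  assumes "ap i j > 0"
  shows "xv i > 0"
proof -
  have "(\<Sum>j\<in>{j. ap i j > 0}. x i j) \<noteq> 0"
    using x_not_bdry x_Delta assms adj_if_ap_pos unfolding bdry_def by blast
  moreover have "(\<Sum>j\<in>{j. ap i j > 0}. x i j) \<le> xv i"
    unfolding xv_eq by (rule sum_mono2) (auto simp: x_nonneg)
  moreover have "(\<Sum>j\<in>{j. ap i j > 0}. x i j) \<ge> 0" by (simp add: sum_nonneg x_nonneg)
  ultimately show ?thesis by linarith
qed

lemma Hfun_eq: "H = (\<Sum>i\<in>UNIV. \<Sum>j\<in>UNIV. ap i j * (x i j)\<^sup>2 / (xv i * xv j))"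
  unfolding Hfun_def sum_over_pairs by (intro sum.cong refl) (auto simp: x_pos_iff)

lemma Hsm_eq_Hfun: "Hsm a p x = H"
proof -
  have "(if 0 < ap i j then ap i j * c / d else 0) = ap i j * c / d" for i j and c d :: real
    using ap_nonneg[of i j] by auto
  then show ?thesis unfolding Hsm_def Hfun_eq sum_over_pairs by simp
qed

lemma Hfun_pos: "H > 0"
proof -
  have "\<not> (\<forall>i j. ap i j > 0 \<longrightarrow> x i j = 0)"
  proof
    assume "\<forall>i j. ap i j > 0 \<longrightarrow> x i j = 0"
    then have "(\<Sum>(i, j)\<in>{(i, j). ap i j > 0}. x i j) = 0" by (intro sum.neutral) auto
    then show False using x_Delta h1_pos unfolding Delta_def by simp
  qed
  then obtain i j where ij: "ap i j > 0" "x i j > 0" using x_pos_iff by blast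
  have nonneg: "ap k l * (x k l)\<^sup>2 / (xv k * xv l) \<ge> 0" for k l
    by (simp add: ap_nonneg xv_nonneg)
  have "0 < ap i j * (x i j)\<^sup>2 / (xv i * xv j)"
    using ij xv_pos_if_x_pos xv_pos_if_x_pos' by simp
  also have "\<dots> \<le> (\<Sum>j\<in>UNIV. ap i j * (x i j)\<^sup>2 / (xv i * xv j))"
    by (rule member_le_sum) (auto simp: nonneg)
  also have "\<dots> \<le> H"
    unfolding Hfun_eq by (rule member_le_sum) (auto simp: nonneg sum_nonneg)
  finally show ?thesis .
qed

abbreviation "\<xi> \<equiv> evec adj x"

lemma edge_ends_spec:
  assumes "e \<in> edges adj" "edge_ends adj e = (i, j)"
  shows "adj i j" "e = {i, j}"
proof -
  obtain k l where "adj k l" "e = {k, l}" using assms(1) unfolding edges_def by blast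
  then have "\<exists>z. case z of (i, j) \<Rightarrow> adj i j \<and> e = {i, j}" by (intro exI[of _ "(k, l)"]) simp
  then have "case edge_ends adj e of (i, j) \<Rightarrow> adj i j \<and> e = {i, j}"
    unfolding edge_ends_def by (rule someI_ex)
  then show "adj i j" "e = {i, j}" using assms(2) by simp_all
qed

lemma evec_edge:
  assumes "adj i j"
  shows "\<xi> {i, j} = x i j"
proof -
  obtain k l where kl: "edge_ends adj {i, j} = (k, l)" by (cases "edge_ends adj {i, j}") auto
  have "{i, j} \<in> edges adj" using assms unfolding edges_def by blast
  then have "{i, j} = {k, l}" using kl by (rule edge_ends_spec)
  then have "x k l = x i j" using x_sym by (auto simp: doubleton_eq_iff)
  then show ?thesis unfolding evec_def kl by simp
qed

lemma edge_cases: assumes "e \<in> edges adj" obtains i j where "adj i j" "e = {i,j}" "i \<noteq> j"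
  using assms adj_irrefl unfolding edges_def by blast

text \<open>Setting the edge variable of f to t moves x only on the two entries of f and the row sums
  x_i only at the two ends of f.\<close>
definition "edge_ind f i j = (if {i,j} = f then 1 else 0 :: real)"
definition "end_ind f i = (if i \<in> f then 1 else 0 :: real)"
definition "x_moved f t i j = x i j + (t - \<xi> f) * edge_ind f i j"
definition "xv_moved f t i = xv i + (t - \<xi> f) * end_ind f i"

lemma arr_of_evec_update: assumes "f \<in> edges adj" shows "arr_of adj (\<xi>(f := t)) = x_moved f t"
proof (intro ext)
  fix i j
  obtain k l where kl: "adj k l" "f = {k,l}" using assms unfolding edges_def by blast
  show "arr_of adj (\<xi>(f := t)) i j = x_moved f t i j"
  proof (cases "adj i j")
    case True
    then show ?thesis using kl evec_edge[OF True] evec_edge[OF kl(1)]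
      by (auto simp: arr_of_def x_moved_def edge_ind_def)
  next
    case False
    have "{i,j} \<noteq> f" using False kl adj_sym by (auto simp: doubleton_eq_iff)
    then show ?thesis using False x_not_adj by (simp add: arr_of_def x_moved_def edge_ind_def)
  qed
qed

lemma sum_edge_ind:
  assumes "f \<in> edges adj"
  shows "(\<Sum>j\<in>UNIV. edge_ind f i j) = end_ind f i"
proof -
  obtain k l where kl: "adj k l" "f = {k,l}" "k \<noteq> l" using edge_cases[OF assms] by blast
  have "(\<Sum>j\<in>UNIV. edge_ind f i j) = card {j. {i,j} = f}"
    unfolding edge_ind_def by (simp add: sum.If_cases)
  also have "\<dots> = end_ind f i"
  proof (cases "i = k")
    case True
    then have "{j. {i,j} = f} = {l}" using kl by (auto simp: doubleton_eq_iff)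
    then show ?thesis using True kl by (simp add: end_ind_def)
  next
    case F1: False
    show ?thesis
    proof (cases "i = l")
      case True
      then have "{j. {i,j} = f} = {k}" using kl by (auto simp: doubleton_eq_iff)
      then show ?thesis using True kl by (simp add: end_ind_def)
    next
      case False
      then have "{j. {i,j} = f} = {}" using kl F1 by (auto simp: doubleton_eq_iff)
      then show ?thesis using False F1 kl by (simp add: end_ind_def)
    qed
  qed
  finally show ?thesis .
qed

lemma vsum_x_moved: assumes "f \<in> edges adj" shows "vsum (x_moved f t) i = xv_moved f t i"
  unfolding vsum_def x_moved_def xv_moved_def
  by (simp add: sum.distrib sum_distrib_left[symmetric] sum_edge_ind[OF assms] xv_eq)

lemma x_moved_at: "x_moved f (\<xi> f) = x" by (intro ext) (simp add: x_moved_def)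
lemma xv_moved_at: "xv_moved f (\<xi> f) i = xv i" by (simp add: xv_moved_def)

definition "y_deriv f i j = ap i j * (edge_ind f i j * (xv i * xv j)
    - x i j * (end_ind f i * xv j + xv i * end_ind f j)) / (xv i * xv j)\<^sup>2"
definition "h_deriv f i j = ap i j * (2 * x i j * edge_ind f i j * (xv i * xv j)
    - (x i j)\<^sup>2 * (end_ind f i * xv j + xv i * end_ind f j)) / (xv i * xv j)\<^sup>2"
definition "H_deriv f = (\<Sum>i\<in>UNIV. \<Sum>j\<in>UNIV. if ap i j > 0 then h_deriv f i j else 0)"

lemma deriv_x_moved: "((\<lambda>t. x_moved f t i j) has_real_derivative edge_ind f i j) (at t0)"
  unfolding x_moved_def by (rule DERIV_cong, (rule derivative_eq_intros refl)+) simp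

lemma deriv_xv_moved: "((\<lambda>t. xv_moved f t i) has_real_derivative end_ind f i) (at t0)"
  unfolding xv_moved_def by (rule DERIV_cong, (rule derivative_eq_intros refl)+) simp

lemma deriv_xv_moved_prod:
  "((\<lambda>t. xv_moved f t i * xv_moved f t j) has_real_derivative end_ind f i * xv j + xv i * end_ind f j)
    (at (\<xi> f))"
  by (rule DERIV_cong[OF DERIV_mult'[OF deriv_xv_moved deriv_xv_moved]])
    (simp add: xv_moved_at algebra_simps)

lemma deriv_y_moved:
  assumes "xv i > 0" "xv j > 0"
  shows "((\<lambda>t. ap i j * x_moved f t i j / (xv_moved f t i * xv_moved f t j))
    has_real_derivative y_deriv f i j) (at (\<xi> f))"
  by (rule DERIV_cong[OF DERIV_divide[OF DERIV_cmult[OF deriv_x_moved] deriv_xv_moved_prod]])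
    (use assms in \<open>simp_all add: xv_moved_at x_moved_at y_deriv_def power2_eq_square algebra_simps\<close>)

lemma deriv_h_moved:
  assumes "xv i > 0" "xv j > 0"
  shows "((\<lambda>t. ap i j * (x_moved f t i j)\<^sup>2 / (xv_moved f t i * xv_moved f t j))
    has_real_derivative h_deriv f i j) (at (\<xi> f))"
  unfolding power2_eq_square[of "x_moved f _ i j"]
  by (rule DERIV_cong[OF DERIV_divide[OF DERIV_cmult[OF DERIV_mult'[OF deriv_x_moved deriv_x_moved]]
        deriv_xv_moved_prod]])
    (use assms in \<open>simp_all add: xv_moved_at x_moved_at h_deriv_def power2_eq_square algebra_simps\<close>)

lemma deriv_Hsm:
  assumes "f \<in> edges adj"
  shows "((\<lambda>t. Hsm a p (x_moved f t)) has_real_derivative H_deriv f) (at (\<xi> f))"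
proof -
  let ?h = "\<lambda>t i j. if ap i j > 0
    then ap i j * (x_moved f t i j)\<^sup>2 / (xv_moved f t i * xv_moved f t j) else 0"
  have "((\<lambda>t. ?h t i j) has_real_derivative (if ap i j > 0 then h_deriv f i j else 0)) (at (\<xi> f))"
    for i j
  proof (cases "ap i j > 0")
    case True
    then have "xv i > 0" "xv j > 0" using xv_pos_if_ap_pos ap_sym by metis+
    then show ?thesis using True deriv_h_moved by simp
  qed simp
  moreover have "Hsm a p (x_moved f t) = (\<Sum>i\<in>UNIV. \<Sum>j\<in>UNIV. ?h t i j)" for t
    unfolding Hsm_def sum_over_pairs vsum_x_moved[OF assms] by simp
  ultimately show ?thesis unfolding H_deriv_def by (simp add: DERIV_sum)
qed

lemma deriv_Fsm:
  assumes e: "e \<in> edges adj" and f: "f \<in> edges adj" and ij: "edge_ends adj e = (i, j)"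
  shows "((\<lambda>t. Fsm adj a p (\<xi>(f := t)) e) has_real_derivative
     edge_ind f i j * (yfun a p x i j - H)
     + x i j * ((if ap i j = 0 then 0 else y_deriv f i j) - H_deriv f)) (at (\<xi> f))"
proof -
  let ?y = "\<lambda>t. if ap i j = 0 then 0 else ap i j * x_moved f t i j / (xv_moved f t i * xv_moved f t j)"
  have eq: "Fsm adj a p (\<xi>(f := t)) e = x_moved f t i j * (?y t - Hsm a p (x_moved f t))" for t
    unfolding Fsm_def ij arr_of_evec_update[OF f] by (simp add: yfun_def vsum_x_moved[OF f])
  have "(?y has_real_derivative (if ap i j = 0 then 0 else y_deriv f i j)) (at (\<xi> f))"
  proof (cases "ap i j = 0")
    case False
    then have "ap i j > 0" using ap_nonneg[of i j] by linarith
    then have "xv i > 0" "xv j > 0" using xv_pos_if_ap_pos ap_sym by metis+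
    then show ?thesis using False deriv_y_moved by simp
  qed simp
  then have "((\<lambda>t. Fsm adj a p (\<xi>(f := t)) e) has_real_derivative
      x_moved f (\<xi> f) i j * ((if ap i j = 0 then 0 else y_deriv f i j) - H_deriv f)
      + edge_ind f i j * (?y (\<xi> f) - Hsm a p (x_moved f (\<xi> f)))) (at (\<xi> f))"
    unfolding eq by (intro DERIV_mult' deriv_x_moved DERIV_diff deriv_Hsm f)
  moreover have "?y (\<xi> f) = yfun a p x i j" by (simp add: x_moved_at xv_moved_at yfun_def)
  ultimately show ?thesis by (simp add: x_moved_at Hsm_eq_Hfun algebra_simps)
qed

lemma jac_eq:
  assumes "e \<in> edges adj" "f \<in> edges adj" "edge_ends adj e = (i, j)"
  shows "jac adj a p x e f = edge_ind f i j * (yfun a p x i j - H)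
    + x i j * ((if ap i j = 0 then 0 else y_deriv f i j) - H_deriv f)"
  unfolding jac_def by (rule DERIV_imp_deriv[OF deriv_Fsm[OF assms]])

definition "shared_weight e f = (\<Sum>v\<in>e \<inter> f. 1 / xv v)"

lemma shared_weight_sym: "shared_weight e f = shared_weight f e"
  unfolding shared_weight_def by (simp add: Int_commute)

lemma shared_weight_edge:
  assumes "i \<noteq> j"
  shows "shared_weight {i, j} f = end_ind f i / xv i + end_ind f j / xv j"
  using assms by (auto simp: shared_weight_def end_ind_def Int_insert_left)

lemma sum_end_ind: assumes "f \<in> edges adj" shows "(\<Sum>i\<in>UNIV. end_ind f i) = 2"
proof -
  obtain k l where kl: "adj k l" "f = {k,l}" "k \<noteq> l" using edge_cases[OF assms] by blast
  have "(\<Sum>i\<in>UNIV. end_ind f i) = card f" unfolding end_ind_def by (simp add: sum.If_cases)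
  then show ?thesis using kl by simp
qed

lemma edge_ends_props: assumes "e \<in> edges adj" "edge_ends adj e = (i,j)"
  shows "adj i j" "e = {i,j}" "i \<noteq> j" "\<xi> e = x i j"
proof -
  show "adj i j" "e = {i,j}" using edge_ends_spec[OF assms] by auto
  then show "i \<noteq> j" "\<xi> e = x i j" using adj_irrefl evec_edge by auto
qed

lemma jac_eq_0_off_supp:
  assumes e: "e \<in> edges adj" and f: "f \<in> edges adj" and "e \<noteq> f" "\<xi> e = 0"
  shows "jac adj a p x e f = 0"
proof -
  obtain i j where ij: "edge_ends adj e = (i, j)" by (cases "edge_ends adj e") auto
  note E = edge_ends_props[OF e ij]
  have "edge_ind f i j = 0" using E \<open>e \<noteq> f\<close> by (simp add: edge_ind_def)
  then show ?thesis using jac_eq[OF e f ij] E \<open>\<xi> e = 0\<close> by simp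
qed

lemma jac_diag_off_supp:
  assumes e: "e \<in> edges adj" and "\<xi> e = 0"
  shows "jac adj a p x e e = - H"
proof -
  obtain i j where ij: "edge_ends adj e = (i, j)" by (cases "edge_ends adj e") auto
  note E = edge_ends_props[OF e ij]
  have "edge_ind e i j = 1" using E by (simp add: edge_ind_def)
  moreover have "yfun a p x i j = 0" using E \<open>\<xi> e = 0\<close> by (simp add: yfun_def)
  ultimately show ?thesis using jac_eq[OF e e ij] E \<open>\<xi> e = 0\<close> by simp
qed

abbreviation "jac_mult v e \<equiv> \<Sum>f\<in>edges adj. complex_of_real (jac adj a p x e f) * v f"

definition "supp_edges = {e \<in> edges adj. \<xi> e > 0}"
abbreviation "Gx \<equiv> graph_of x"

lemma Gx_iff: "Gx i j \<longleftrightarrow> x i j > 0" by (simp add: graph_of_def)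
lemma symp_Gx: "symp Gx" using x_sym by (simp add: graph_of_def symp_def)
lemma irreflp_Gx: "irreflp Gx" using x_diag by (simp add: graph_of_def irreflp_def)

lemma supp_edges_iff: "g \<in> supp_edges \<longleftrightarrow> (\<exists>i j. g = {i,j} \<and> x i j > 0)"
proof
  assume g: "g \<in> supp_edges"
  obtain i j where ij: "edge_ends adj g = (i,j)" by (cases "edge_ends adj g") auto
  note E = edge_ends_props[OF _ ij]
  show "\<exists>i j. g = {i,j} \<and> x i j > 0" using g E unfolding supp_edges_def by auto
next
  assume "\<exists>i j. g = {i,j} \<and> x i j > 0"
  then obtain i j where ij: "g = {i,j}" "x i j > 0" by blast
  have "adj i j" using adj_if_x_pos[OF ij(2)] .
  then show "g \<in> supp_edges" using ij evec_edge unfolding supp_edges_def edges_def by auto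
qed

lemma supp_edges_subset: "supp_edges \<subseteq> edges adj" unfolding supp_edges_def by auto

lemma evec_off_supp:
  assumes "e \<in> edges adj" "e \<notin> supp_edges"
  shows "\<xi> e = 0"
proof -
  obtain i j where ij: "edge_ends adj e = (i, j)" by (cases "edge_ends adj e") auto
  then show ?thesis
    using edge_ends_props[OF assms(1) ij] assms x_nonneg[of i j] unfolding supp_edges_def by auto
qed

lemma jac_mult_supp:
  assumes "\<forall>f\<in>edges adj - supp_edges. v f = 0"
  shows "jac_mult v e = (\<Sum>f\<in>supp_edges. complex_of_real (jac adj a p x e f) * v f)"
  by (rule sum.mono_neutral_right) (use assms supp_edges_subset in auto)

lemma jac_mult_off_supp:
  assumes e: "e \<in> edges adj" "e \<notin> supp_edges"
  shows "jac_mult v e = - complex_of_real H * v e"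
proof -
  have "jac_mult v e = (\<Sum>f\<in>edges adj. if f = e then - complex_of_real H * v e else 0)"
    using jac_eq_0_off_supp[OF e(1) _ _ evec_off_supp[OF e]] jac_diag_off_supp[OF e(1) evec_off_supp[OF e]]
    by (intro sum.cong refl) auto
  also have "\<dots> = - complex_of_real H * v e" using e by simp
  finally show ?thesis .
qed

lemma jac_mult_off_supp_eq_0:
  assumes e: "e \<in> edges adj" "e \<notin> supp_edges" and vz: "\<forall>f\<in>edges adj - supp_edges. v f = 0"
  shows "jac_mult v e = 0"
proof -
  have "(\<Sum>f\<in>supp_edges. complex_of_real (jac adj a p x e f) * v f) = 0"
    using jac_eq_0_off_supp[OF e(1) _ _ evec_off_supp[OF e]] supp_edges_subset e
    by (intro sum.neutral) auto
  then show ?thesis using jac_mult_supp[OF vz] by simp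
qed

lemma xv_leaf:
  assumes "{m. Gx l m} = {n}"
  shows "xv l = x l n"
proof -
  have "x l m = 0" if "m \<noteq> n" for m
    using assms that x_pos_iff[of l m] by (auto simp: Gx_iff)
  then have "xv l = (\<Sum>m\<in>UNIV. if m = n then x l n else 0)" unfolding xv_eq by (intro sum.cong) auto
  then show ?thesis by simp
qed

lemma supp_edges_at: "{g\<in>supp_edges. n \<in> g} = (\<lambda>j. {n,j}) ` {j. x n j > 0}"
proof
  show "{g\<in>supp_edges. n \<in> g} \<subseteq> (\<lambda>j. {n,j}) ` {j. x n j > 0}"
  proof
    fix g assume g: "g \<in> {g\<in>supp_edges. n \<in> g}"
    then obtain i j where ij: "g = {i,j}" "x i j > 0" using supp_edges_iff by auto
    show "g \<in> (\<lambda>j. {n,j}) ` {j. x n j > 0}"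
    proof (cases "n = i")
      case True then show ?thesis using ij by auto
    next
      case False then have "n = j" using g ij by auto
      then show ?thesis using ij x_sym[of i j] by (auto simp: insert_commute)
    qed
  qed
next
  show "(\<lambda>j. {n,j}) ` {j. x n j > 0} \<subseteq> {g\<in>supp_edges. n \<in> g}" using supp_edges_iff by auto
qed

lemma sum_evec_supp_at: "(\<Sum>g\<in>{g\<in>supp_edges. n \<in> g}. \<xi> g) = xv n"
proof -
  have inj: "inj_on (\<lambda>j. {n,j}) {j. x n j > 0}"
    by (auto simp: inj_on_def doubleton_eq_iff)
  have "(\<Sum>g\<in>{g\<in>supp_edges. n \<in> g}. \<xi> g) = (\<Sum>j\<in>{j. x n j > 0}. \<xi> {n,j})"
    unfolding supp_edges_at by (rule sum.reindex[OF inj, unfolded comp_def])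
  also have "\<dots> = (\<Sum>j\<in>{j. x n j > 0}. x n j)"
    by (intro sum.cong refl) (auto intro: evec_edge adj_if_x_pos)
  also have "\<dots> = xv n" unfolding xv_eq
    by (rule sum.mono_neutral_left) (auto simp: order.strict_iff_not x_nonneg antisym)
  finally show ?thesis .
qed

lemma supp_edge_has_leaf:
  assumes "unique_hub Gx" "e \<in> supp_edges"
  obtains n l where "e = {n, l}" "x n l > 0" "{m. Gx l m} = {n}"
proof -
  obtain i j where ij: "e = {i, j}" "x i j > 0" using assms(2) supp_edges_iff by blast
  then have Gij: "Gx i j" "Gx j i" using x_sym[of i j] by (simp_all add: Gx_iff)
  have "i \<noteq> j" using ij(2) x_diag by auto
  then have "ndeg Gx i \<le> 1 \<or> ndeg Gx j \<le> 1"
    by (rule unique_hub_edge_has_leaf[OF assms(1) Gij(1)])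
  then show ?thesis
  proof
    assume "ndeg Gx i \<le> 1"
    then have "{m. Gx i m} = {j}" by (rule neighbours_if_ndeg_le_1) (rule Gij(1))
    moreover have "e = {j, i}" "x j i > 0" using ij x_sym[of i j] by auto
    ultimately show ?thesis by (rule that[rotated 2])
  next
    assume "ndeg Gx j \<le> 1"
    then have "{m. Gx j m} = {i}" by (rule neighbours_if_ndeg_le_1) (rule Gij(2))
    with ij show ?thesis by (rule that)
  qed
qed

lemma sum_end_ind_supp_edges:
  "(\<Sum>f\<in>supp_edges. complex_of_real (end_ind f n) * v f) = (\<Sum>f\<in>{f\<in>supp_edges. n \<in> f}. v f)"
  by (subst sum.inter_filter) (auto simp: end_ind_def supp_edges_def intro!: sum.cong)

lemma shared_weight_sum_leaf_edge:
  assumes leaf: "{m. Gx l m} = {n}" and x_nl: "x n l > 0"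
  shows "(\<Sum>f\<in>supp_edges. complex_of_real (shared_weight {n, l} f) * v f)
    = complex_of_real (1 / xv n) * (\<Sum>f\<in>{f\<in>supp_edges. n \<in> f}. v f)
      + complex_of_real (1 / \<xi> {n, l}) * v {n, l}"
proof -
  have nl: "n \<noteq> l" using x_nl x_diag by auto
  have xi: "\<xi> {n, l} = xv l" using xv_leaf[OF leaf] evec_edge adj_if_x_pos x_nl x_sym by simp
  have "{f\<in>supp_edges. l \<in> f} = {{n, l}}"
    using supp_edges_at[of l] leaf by (auto simp: Gx_iff insert_commute)
  then have at_l: "(\<Sum>f\<in>{f\<in>supp_edges. l \<in> f}. v f) = v {n, l}" by simp
  have "(\<Sum>f\<in>supp_edges. complex_of_real (shared_weight {n, l} f) * v f)
      = (\<Sum>f\<in>supp_edges. complex_of_real (1 / xv n) * (complex_of_real (end_ind f n) * v f)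
          + complex_of_real (1 / xv l) * (complex_of_real (end_ind f l) * v f))"
    unfolding shared_weight_edge[OF nl] by (intro sum.cong refl) (simp add: algebra_simps)
  also have "\<dots> = complex_of_real (1 / xv n) * (\<Sum>f\<in>{f\<in>supp_edges. n \<in> f}. v f)
      + complex_of_real (1 / xv l) * v {n, l}"
    unfolding sum.distrib sum_distrib_left[symmetric] sum_end_ind_supp_edges at_l ..
  finally show ?thesis using xi by simp
qed

text \<open>On the support the Jacobian at an equilibrium is H (I - D W), with D = diag \<xi> and
  W = shared_weight; it is similar to the symmetric H (I - D^(1/2) W D^(1/2)). Off the support
  the symmetric matrix is extended by the identity, so its eigenvectors for eigenvalues other
  than 1 vanish there.\<close>
definition scaled_weight :: "'v set \<Rightarrow> 'v set \<Rightarrow> real" where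
  "scaled_weight e f = (if e \<in> supp_edges \<and> f \<in> supp_edges
      then sqrt (\<xi> e) * sqrt (\<xi> f) * shared_weight e f else if e = f then 1 else 0)"

lemma scaled_weight_sym: "scaled_weight e f = scaled_weight f e"
  unfolding scaled_weight_def using shared_weight_sym by auto

text \<open>Two adjacent hubs a0 and b, with c another neighbour of b: the test vector
  e1/\<surd>\<xi>(e1) - e2/\<surd>\<xi>(e2) for e1 = {a0, b}, e2 = {b, c} has Rayleigh quotient
  (1/x_a0 + 1/x_c) / (1/x_a0b + 1/x_bc) < 1.\<close>
lemma scaled_weight_form_below_sum_sq:
  assumes ab: "Gx a0 b" and bc: "Gx b c" "c \<noteq> a0" and hub: "2 \<le> ndeg Gx a0"
  obtains z where "quad_form scaled_weight z < 1 * sum_sq z"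
proof -
  obtain a' where a': "Gx a0 a'" "a' \<noteq> b" using other_neighbour_if_ndeg_ge_2[OF hub] by blast
  have x_ab: "x a0 b > 0" and x_bc: "x b c > 0" and x_aa: "x a0 a' > 0"
    using ab bc a' by (simp_all add: Gx_iff)
  have "a0 \<noteq> b" "b \<noteq> c" using x_ab x_bc x_diag by auto
  define e1 where "e1 = {a0, b}"
  define e2 where "e2 = {b, c}"
  have e12: "e1 \<noteq> e2" unfolding e1_def e2_def using \<open>a0 \<noteq> b\<close> bc(2) by (auto simp: doubleton_eq_iff)
  have supp: "e1 \<in> supp_edges" "e2 \<in> supp_edges"
    unfolding e1_def e2_def using supp_edges_iff x_ab x_bc by blast+
  have xi: "\<xi> e1 = x a0 b" "\<xi> e2 = x b c"
    unfolding e1_def e2_def using evec_edge adj_if_x_pos x_ab x_bc by simp_all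
  define sg where "sg g = (if g = e1 then 1 else if g = e2 then -1 else 0 :: real)" for g
  define z where "z g = sg g / sqrt (\<xi> g)" for g
  have z_out: "z g = 0" if "g \<noteq> e1" "g \<noteq> e2" for g using that by (simp add: z_def sg_def)
  have Qz: "scaled_weight g h * z g * z h = sg g * sg h * shared_weight g h"
    if "g \<in> {e1, e2}" "h \<in> {e1, e2}" for g h
  proof -
    have "g \<in> supp_edges" "h \<in> supp_edges" "\<xi> g > 0" "\<xi> h > 0"
      using that supp unfolding supp_edges_def by auto
    then show ?thesis unfolding scaled_weight_def z_def by (simp add: field_simps)
  qed
  have "quad_form scaled_weight z
      = (\<Sum>h\<in>UNIV. scaled_weight e1 h * z e1 * z h) + (\<Sum>h\<in>UNIV. scaled_weight e2 h * z e2 * z h)"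
    unfolding quad_form_def by (rule sum_UNIV_two[OF e12]) (simp add: z_out)
  also have "\<dots> = shared_weight e1 e1 - shared_weight e1 e2 - shared_weight e2 e1 + shared_weight e2 e2"
    using sum_UNIV_two[OF e12, of "\<lambda>h. scaled_weight e1 h * z e1 * z h"]
      sum_UNIV_two[OF e12, of "\<lambda>h. scaled_weight e2 h * z e2 * z h"] z_out Qz
    by (simp add: sg_def e12 e12[symmetric])
  also have "\<dots> = 1 / xv a0 + 1 / xv c"
    unfolding e1_def e2_def shared_weight_edge[OF \<open>a0 \<noteq> b\<close>] shared_weight_edge[OF \<open>b \<noteq> c\<close>]
    using \<open>a0 \<noteq> b\<close> \<open>b \<noteq> c\<close> bc(2) by (simp add: end_ind_def)
  also have "\<dots> < 1 / x a0 b + 1 / x b c"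
  proof -
    have "x a0 b + x a0 a' = (\<Sum>m\<in>{b, a'}. x a0 m)" using a'(2) by simp
    also have "\<dots> \<le> xv a0" unfolding xv_eq by (rule sum_mono2) (auto simp: x_nonneg)
    finally have "1 / xv a0 < 1 / x a0 b" using x_aa x_ab by (simp add: frac_less2)
    moreover have "1 / xv c \<le> 1 / x b c" using x_le_xv[of c b] x_sym x_bc by (simp add: frac_le)
    ultimately show ?thesis by simp
  qed
  also have "\<dots> = 1 * sum_sq z"
    using sum_UNIV_two[OF e12, of "\<lambda>g. (z g)\<^sup>2"] z_out xi x_ab x_bc e12
    by (simp add: sum_sq_def z_def sg_def power_divide)
  finally show ?thesis by (rule that)
qed

lemma ap_nuc_edge:
  assumes "propP adj a p S" "S n j"
  shows "ap_nuc a p S n = ap n j"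
proof -
  have "\<exists>k. S n k" using assms(2) by blast
  then have "S n (SOME k. S n k)" by (rule someI_ex)
  then have "ap n (SOME k. S n k) = ap n j" using assms unfolding propP_def by blast
  then show ?thesis unfolding ap_nuc_def using assms(2) by auto
qed

context
  fixes N :: "'v set"
  assumes P: "propP adj a p Gx" and nuc: "is_nuclei Gx N"
    and xv_nuclei: "\<And>n. n \<in> N \<Longrightarrow> xv n = ap_nuc a p Gx n / (2 * (\<Sum>m\<in>N. ap_nuc a p Gx m))"
begin

lemma ratio_GammaG_nucleus_leaf:
  assumes x_nl: "x n l > 0" and n: "n \<in> N" and leaf: "ndeg Gx l \<le> 1"
  shows "ap n l * x n l / (xv n * xv l) = 2 * (\<Sum>m\<in>N. ap_nuc a p Gx m)"
proof -
  have "Gx l n" using x_nl x_sym[of n l] by (simp add: Gx_iff)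
  with leaf have "{m. Gx l m} = {n}" by (rule neighbours_if_ndeg_le_1)
  then have "xv l = x n l" using xv_leaf x_sym by simp
  moreover have "Gx n l" using x_nl by (simp add: Gx_iff)
  then have "ap n l > 0" "xv n = ap n l / (2 * (\<Sum>m\<in>N. ap_nuc a p Gx m))"
    using ap_pos_if_propP[OF P] xv_nuclei[OF n] ap_nuc_edge[OF P] by simp_all
  moreover have "xv n > 0" using xv_pos_if_x_pos[OF x_nl] .
  ultimately show ?thesis using x_nl by (auto simp: field_simps)
qed

lemma ratio_GammaG:
  assumes x_ij: "x i j > 0"
  shows "ap i j * x i j / (xv i * xv j) = 2 * (\<Sum>m\<in>N. ap_nuc a p Gx m)"
proof -
  obtain n where n: "n \<in> N" "Gx\<^sup>*\<^sup>* i n" using nuc unfolding is_nuclei_def by blast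
  have "Gx i j" using x_ij by (simp add: Gx_iff)
  from nucleus_of_edge[OF symp_Gx irreflp_Gx unique_hub_if_propP[OF P] nuc this n]
  show ?thesis
  proof
    assume "n = i \<and> ndeg Gx j \<le> 1"
    then show ?thesis using ratio_GammaG_nucleus_leaf x_ij n by blast
  next
    assume "n = j \<and> ndeg Gx i \<le> 1"
    then show ?thesis
      using ratio_GammaG_nucleus_leaf[of j i] x_ij x_sym[of i j] ap_sym[of i j] n
      by (simp add: mult.commute)
  qed
qed

lemma Hfun_GammaG: "H = 2 * (\<Sum>m\<in>N. ap_nuc a p Gx m)"
proof -
  have "ap i j * (x i j)\<^sup>2 / (xv i * xv j) = 2 * (\<Sum>m\<in>N. ap_nuc a p Gx m) * x i j" for i j
  proof (cases "x i j > 0")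
    case True
    have "ap i j * (x i j)\<^sup>2 / (xv i * xv j) = ap i j * x i j / (xv i * xv j) * x i j"
      by (simp add: power2_eq_square)
    then show ?thesis unfolding ratio_GammaG[OF True] .
  qed (simp add: x_pos_iff)
  then show ?thesis using x_total by (simp add: Hfun_eq sum_distrib_left[symmetric])
qed

lemma Gamma_if_GammaG: "x \<in> Gamma adj a p h1"
proof -
  have "Ffun a p x i j = 0" for i j
  proof (cases "x i j > 0")
    case True
    then have "ap i j \<noteq> 0" using ap_pos_if_propP[OF P, of i j] by (metis Gx_iff less_irrefl)
    then show ?thesis using ratio_GammaG[OF True] Hfun_GammaG by (simp add: Ffun_def yfun_def)
  qed (simp add: Ffun_def x_pos_iff)
  then show ?thesis using x_Delta unfolding Gamma_def by blast
qed

end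

lemma Gamma_propP_if_GammaG:
  assumes "propP adj a p S" "is_nuclei S N" "x \<in> GammaG adj a p h1 S N"
  shows "x \<in> Gamma adj a p h1 \<and> propP adj a p Gx"
proof -
  have S: "Gx = S" using assms(3) unfolding GammaG_def by simp
  have "xv n = ap_nuc a p Gx n / (2 * (\<Sum>m\<in>N. ap_nuc a p Gx m))" if "n \<in> N" for n
    using assms(3) that unfolding S GammaG_def by simp
  then have "x \<in> Gamma adj a p h1" using Gamma_if_GammaG assms(1,2) unfolding S by blast
  then show ?thesis using assms(1) S by simp
qed

lemma sum_xv_half_if_bipartite:
  assumes cross: "\<And>i j. x i j > 0 \<Longrightarrow> i \<in> N \<longleftrightarrow> j \<notin> N"
  shows "(\<Sum>n\<in>N. xv n) = 1 / 2"
proof -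
  have restrict: "xv i = (\<Sum>j\<in>-M. x i j)" if "\<And>j. x i j > 0 \<Longrightarrow> j \<notin> M" for i M
    unfolding xv_eq using that x_pos_iff by (intro sum.mono_neutral_right) auto
  have to_N: "xv i = (\<Sum>j\<in>-(-N). x i j)" if "i \<notin> N" for i
    by (rule restrict) (use cross that in auto)
  have to_compl: "xv i = (\<Sum>j\<in>-N. x i j)" if "i \<in> N" for i
    by (rule restrict) (use cross that in auto)
  have "(\<Sum>i\<in>-N. xv i) = (\<Sum>i\<in>-N. \<Sum>j\<in>N. x i j)"
    using to_N by (intro sum.cong refl) simp
  also have "\<dots> = (\<Sum>j\<in>N. \<Sum>i\<in>-N. x j i)"
    by (subst sum.swap) (simp add: x_sym)
  also have "\<dots> = (\<Sum>j\<in>N. xv j)"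
    using to_compl by (intro sum.cong refl) simp
  finally have "(\<Sum>i\<in>-N. xv i) = (\<Sum>j\<in>N. xv j)" .
  moreover have "(\<Sum>i\<in>UNIV. xv i) = (\<Sum>i\<in>-N. xv i) + (\<Sum>i\<in>N. xv i)"
    using sum.subset_diff[of N UNIV xv] by (simp add: Compl_eq_Diff_UNIV)
  ultimately show ?thesis using xv_total by simp
qed

lemma subgraph_Gx: "subgraph adj Gx"
  unfolding subgraph_def using x_sym adj_if_x_pos by (simp add: Gx_iff)

end

locale interior_equilibrium = interior_point +
  assumes x_Gamma: "x \<in> Gamma adj a p h1"
begin

lemma yfun_eq_Hfun:
  assumes "x i j > 0"
  shows "yfun a p x i j = H"
proof -
  have "Ffun a p x i j = 0" using x_Gamma unfolding Gamma_def by auto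
  then show ?thesis using assms unfolding Ffun_def by auto
qed

lemma ap_pos_if_x_pos:
  assumes "x i j > 0"
  shows "ap i j > 0"
proof -
  have "ap i j \<noteq> 0" using yfun_eq_Hfun[OF assms] Hfun_pos unfolding yfun_def by auto
  then show ?thesis using ap_nonneg[of i j] by linarith
qed

lemma ap_equilibrium:
  assumes "x i j > 0"
  shows "ap i j = H * xv i * xv j / x i j"
proof -
  have "ap i j * x i j / (xv i * xv j) = H"
    using yfun_eq_Hfun[OF assms] ap_pos_if_x_pos[OF assms] unfolding yfun_def
      by (simp split: if_splits)
  then show ?thesis
    using assms xv_pos_if_x_pos[OF assms] xv_pos_if_x_pos'[OF assms] by (auto simp: field_simps)
qed

lemma h_deriv_equilibrium:
  assumes f: "f \<in> edges adj" "\<xi> f > 0"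
  shows "(if ap i j > 0 then h_deriv f i j else 0)
    = H * (2 * edge_ind f i j - x i j * (end_ind f i / xv i + end_ind f j / xv j))"
proof (cases "x i j > 0")
  case True
  have "h_deriv f i j = H * (2 * edge_ind f i j - x i j * (end_ind f i / xv i + end_ind f j / xv j))"
    unfolding h_deriv_def ap_equilibrium[OF True]
    using True xv_pos_if_x_pos[OF True] xv_pos_if_x_pos'[OF True]
    by (simp add: field_simps power2_eq_square)
  then show ?thesis using ap_pos_if_x_pos[OF True] by simp
next
  case False
  then have x0: "x i j = 0" using x_nonneg[of i j] by linarith
  obtain k l where kl: "adj k l" "f = {k, l}" using edge_cases[OF f(1)] by blast
  then have "x k l > 0" using f(2) evec_edge by simp
  then have "{i, j} \<noteq> f" using x0 kl x_sym[of k l] by (auto simp: doubleton_eq_iff)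
  then show ?thesis using x0 by (simp add: h_deriv_def edge_ind_def)
qed

lemma sum_x_end_ind_div_xv:
  assumes f: "f \<in> edges adj" "\<xi> f > 0"
  shows "(\<Sum>i\<in>UNIV. \<Sum>j\<in>UNIV. x i j * (end_ind f i / xv i)) = 2"
proof -
  obtain k l where kl: "adj k l" "f = {k, l}" using edge_cases[OF f(1)] by blast
  then have "x k l > 0" using f(2) evec_edge by simp
  then have xv_pos: "i \<in> f \<Longrightarrow> xv i > 0" for i
    using kl xv_pos_if_x_pos xv_pos_if_x_pos' by auto
  have "(\<Sum>i\<in>UNIV. \<Sum>j\<in>UNIV. x i j * (end_ind f i / xv i)) = (\<Sum>i\<in>UNIV. xv i * (end_ind f i / xv i))"
    by (simp only: sum_distrib_right[symmetric] xv_eq)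
  also have "\<dots> = (\<Sum>i\<in>UNIV. end_ind f i)"
    by (intro sum.cong refl) (auto simp: end_ind_def dest: xv_pos)
  finally show ?thesis using sum_end_ind[OF f(1)] by simp
qed

lemma H_deriv_eq_0:
  assumes f: "f \<in> edges adj" "\<xi> f > 0"
  shows "H_deriv f = 0"
proof -
  have swap: "(\<Sum>i\<in>UNIV. \<Sum>j\<in>UNIV. x i j * (end_ind f j / xv j)) = 2"
    using sum_x_end_ind_div_xv[OF f] by (subst sum.swap) (simp add: x_sym)
  have "H_deriv f = (\<Sum>i\<in>UNIV. \<Sum>j\<in>UNIV.
      H * (2 * edge_ind f i j - x i j * (end_ind f i / xv i + end_ind f j / xv j)))"
    unfolding H_deriv_def h_deriv_equilibrium[OF f] ..
  also have "\<dots> = H * (2 * (\<Sum>i\<in>UNIV. \<Sum>j\<in>UNIV. edge_ind f i j)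
      - (\<Sum>i\<in>UNIV. \<Sum>j\<in>UNIV. x i j * (end_ind f i / xv i))
      - (\<Sum>i\<in>UNIV. \<Sum>j\<in>UNIV. x i j * (end_ind f j / xv j)))"
    by (simp add: sum_distrib_left sum_subtractf sum.distrib algebra_simps)
  also have "\<dots> = 0"
    using sum_edge_ind[OF f(1)] sum_end_ind[OF f(1)] sum_x_end_ind_div_xv[OF f] swap by simp
  finally show ?thesis .
qed

lemma jac_on_supp:
  assumes e: "e \<in> edges adj" "\<xi> e > 0" and f: "f \<in> edges adj" "\<xi> f > 0"
  shows "jac adj a p x e f = H * ((if e = f then 1 else 0) - \<xi> e * shared_weight e f)"
proof -
  obtain i j where ij: "edge_ends adj e = (i, j)" by (cases "edge_ends adj e") auto
  note E = edge_ends_props[OF e(1) ij]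
  have x_ij: "x i j > 0" using e(2) E by simp
  have "ap i j \<noteq> 0" using ap_pos_if_x_pos[OF x_ij] by (metis less_irrefl)
  then have "jac adj a p x e f = x i j * y_deriv f i j"
    using jac_eq[OF e(1) f(1) ij] yfun_eq_Hfun[OF x_ij] H_deriv_eq_0[OF f] by simp
  also have "\<dots> = H * (edge_ind f i j - x i j * (end_ind f i / xv i + end_ind f j / xv j))"
    unfolding y_deriv_def ap_equilibrium[OF x_ij]
    using x_ij xv_pos_if_x_pos[OF x_ij] xv_pos_if_x_pos'[OF x_ij]
    by (simp add: field_simps power2_eq_square)
  also have "\<dots> = H * ((if e = f then 1 else 0) - \<xi> e * shared_weight e f)"
    using E shared_weight_edge[OF E(3)] by (auto simp: edge_ind_def)
  finally show ?thesis .
qed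

lemma jac_mult_supp_edge:
  assumes e: "e \<in> supp_edges" and vz: "\<forall>f\<in>edges adj - supp_edges. v f = 0"
  shows "jac_mult v e = complex_of_real H * v e
    - complex_of_real (H * \<xi> e) * (\<Sum>f\<in>supp_edges. complex_of_real (shared_weight e f) * v f)"
proof -
  have e': "e \<in> edges adj" "\<xi> e > 0" using e unfolding supp_edges_def by auto
  have "complex_of_real (jac adj a p x e f) * v f = (if e = f then complex_of_real H * v f else 0)
      - complex_of_real (H * \<xi> e) * (complex_of_real (shared_weight e f) * v f)"
    if "f \<in> supp_edges" for f
  proof -
    have f: "f \<in> edges adj" "\<xi> f > 0" using that unfolding supp_edges_def by auto
    show ?thesis unfolding jac_on_supp[OF e' f] by (auto simp: algebra_simps)
  qed
  then show ?thesis
    using e jac_mult_supp[OF vz] by (simp add: sum_subtractf sum_distrib_left)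
qed

text \<open>Since the far end of g = {n, l'} is a leaf, the row of the eigen-equation at g only sees
  v on the star of n.\<close>
lemma eigenvector_on_star:
  assumes hub: "unique_hub Gx"
    and eig: "\<And>e. e \<in> edges adj \<Longrightarrow> jac_mult v e = mu * v e"
    and vz: "\<forall>f\<in>edges adj - supp_edges. v f = 0"
    and leaf: "{m. Gx l m} = {n}"
    and g: "g \<in> supp_edges" "n \<in> g"
  shows "mu * v g = - complex_of_real (H * \<xi> g / xv n) * (\<Sum>f\<in>{f\<in>supp_edges. n \<in> f}. v f)"
proof -
  obtain l' where l': "g = {n, l'}" "x n l' > 0" using g supp_edges_at[of n] by blast
  have "{m. Gx l' m} = {n}"
    using unique_hub_sibling_leaf[OF symp_Gx irreflp_Gx hub leaf] l'(2) Gx_iff by blast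
  note weights = shared_weight_sum_leaf_edge[OF this l'(2), of v]
  have pos: "\<xi> g > 0" "xv n > 0" using g(1) xv_pos_if_x_pos[OF l'(2)] by (auto simp: supp_edges_def)
  have "mu * v g = complex_of_real H * v g - complex_of_real (H * \<xi> g)
      * (\<Sum>f\<in>supp_edges. complex_of_real (shared_weight g f) * v f)"
    using eig[of g] jac_mult_supp_edge[OF g(1) vz] g(1) supp_edges_subset by auto
  also have "\<dots> = - complex_of_real (H * \<xi> g / xv n) * (\<Sum>f\<in>{f\<in>supp_edges. n \<in> f}. v f)"
    unfolding l'(1) weights using pos l'(1) by (simp add: field_simps)
  finally show ?thesis .
qed

text \<open>Summing the previous identity over the star gives \<mu> s = -H s, since the \<xi>_g add up to x_n.
  Hence \<mu> = -H, or s = 0 and then \<mu> = 0.\<close>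
lemma eigenvalue_nonpos_if_unique_hub:
  assumes hub: "unique_hub Gx" and ev: "jac_eigenvalue adj a p x mu"
  shows "Re mu \<le> 0"
proof -
  obtain v where nz: "\<exists>e\<in>edges adj. v e \<noteq> 0"
    and eig: "\<And>e. e \<in> edges adj \<Longrightarrow> jac_mult v e = mu * v e"
    using ev unfolding jac_eigenvalue_def by blast
  show ?thesis
  proof (cases "\<exists>e\<in>edges adj - supp_edges. v e \<noteq> 0")
    case True
    then obtain e where e: "e \<in> edges adj" "e \<notin> supp_edges" "v e \<noteq> 0" by blast
    then have "- complex_of_real H * v e = mu * v e" using jac_mult_off_supp eig by metis
    then have "mu = - complex_of_real H" using e(3) by (metis mult_cancel_right)
    then show ?thesis using Hfun_pos by simp
  next
    case False
    then have vz: "\<forall>f\<in>edges adj - supp_edges. v f = 0" by blast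
    obtain e where e: "e \<in> edges adj" "v e \<noteq> 0" using nz by blast
    then have "e \<in> supp_edges" using vz by blast
    then obtain n l where nl: "e = {n, l}" "x n l > 0" "{m. Gx l m} = {n}"
      using supp_edge_has_leaf[OF hub] by blast
    define N where "N = {f\<in>supp_edges. n \<in> f}"
    define s where "s = (\<Sum>f\<in>N. v f)"
    have star: "mu * v g = - complex_of_real (H * \<xi> g / xv n) * s" if "g \<in> N" for g
      using eigenvector_on_star[OF hub eig vz nl(3)] that unfolding N_def s_def by blast
    have "mu * s = (\<Sum>g\<in>N. mu * v g)" unfolding s_def by (simp add: sum_distrib_left)
    also have "\<dots> = (\<Sum>g\<in>N. - complex_of_real (H / xv n) * s * complex_of_real (\<xi> g))"
      using star by (intro sum.cong refl) simp
    also have "\<dots> = - complex_of_real (H / xv n) * s * complex_of_real (\<Sum>g\<in>N. \<xi> g)"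
      by (simp add: sum_distrib_left)
    also have "\<dots> = - complex_of_real H * s"
      unfolding N_def sum_evec_supp_at using xv_pos_if_x_pos[OF nl(2)] by simp
    finally have "mu * s = - complex_of_real H * s" .
    then have "mu = - complex_of_real H \<or> s = 0" by (metis mult_cancel_right)
    moreover have "e \<in> N" using \<open>e \<in> supp_edges\<close> nl(1) unfolding N_def by simp
    then have "s = 0 \<Longrightarrow> mu = 0" using star[of e] e(2) by simp
    ultimately show ?thesis using Hfun_pos by auto
  qed
qed

lemma jac_eigenvalue_if_scaled_weight_eigenvector:
  assumes w_nz: "\<exists>e. w e \<noteq> 0" and lam: "lam \<noteq> 1"
    and w_eig: "\<And>e. (\<Sum>f\<in>UNIV. scaled_weight e f * w f) = lam * w e"
  shows "jac_eigenvalue adj a p x (complex_of_real (H * (1 - lam)))"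
proof -
  have w_out: "w e = 0" if "e \<notin> supp_edges" for e
  proof -
    have "(\<Sum>f\<in>UNIV. scaled_weight e f * w f) = (\<Sum>f\<in>UNIV. if f = e then w e else 0)"
      using that by (intro sum.cong refl) (auto simp: scaled_weight_def)
    then have "w e = lam * w e" using w_eig[of e] by simp
    then show ?thesis using lam by simp
  qed
  define vr where "vr e = (if e \<in> supp_edges then sqrt (\<xi> e) * w e else 0)" for e
  define v where "v e = complex_of_real (vr e)" for e
  have eig: "\<xi> e * (\<Sum>f\<in>supp_edges. shared_weight e f * vr f) = lam * vr e" if e: "e \<in> supp_edges" for e
  proof -
    have "(\<Sum>f\<in>UNIV. scaled_weight e f * w f) = (\<Sum>f\<in>supp_edges. scaled_weight e f * w f)"
      by (rule sum.mono_neutral_right) (use e in \<open>auto simp: scaled_weight_def\<close>)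
    also have "\<dots> = sqrt (\<xi> e) * (\<Sum>f\<in>supp_edges. shared_weight e f * vr f)"
      using e by (simp add: sum_distrib_left scaled_weight_def vr_def mult_ac)
    finally have "sqrt (\<xi> e) * (\<Sum>f\<in>supp_edges. shared_weight e f * vr f) = lam * w e"
      using w_eig[of e] by simp
    then have "sqrt (\<xi> e) * (sqrt (\<xi> e) * (\<Sum>f\<in>supp_edges. shared_weight e f * vr f))
        = lam * (sqrt (\<xi> e) * w e)"
      by (simp add: algebra_simps)
    moreover have "\<xi> e > 0" using e unfolding supp_edges_def by auto
    ultimately show ?thesis using e by (simp add: vr_def mult.assoc[symmetric])
  qed
  have vz: "\<forall>f\<in>edges adj - supp_edges. v f = 0" by (simp add: v_def vr_def)
  show ?thesis
    unfolding jac_eigenvalue_def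
  proof (intro exI conjI ballI)
    obtain e where e: "w e \<noteq> 0" using w_nz by blast
    then have "e \<in> supp_edges" using w_out by blast
    then have "e \<in> edges adj" "\<xi> e > 0" unfolding supp_edges_def by auto
    with e \<open>e \<in> supp_edges\<close> show "\<exists>e\<in>edges adj. v e \<noteq> 0"
      by (intro bexI[of _ e]) (simp_all add: v_def vr_def)
  next
    fix e assume e: "e \<in> edges adj"
    show "jac_mult v e = complex_of_real (H * (1 - lam)) * v e"
    proof (cases "e \<in> supp_edges")
      case True
      have "jac_mult v e = complex_of_real (H * vr e - H * (\<xi> e * (\<Sum>f\<in>supp_edges. shared_weight e f * vr f)))"
        unfolding jac_mult_supp_edge[OF True vz] by (simp add: v_def sum_distrib_left mult.assoc)
      then show ?thesis unfolding eig[OF True] by (simp add: v_def algebra_simps)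
    next
      case False
      then show ?thesis using jac_mult_off_supp_eq_0[OF e False vz] by (simp add: v_def vr_def)
    qed
  qed
qed

lemma no_adjacent_hubs_if_stable:
  assumes stable: "\<And>mu. jac_eigenvalue adj a p x mu \<Longrightarrow> Re mu \<le> 0"
    and "Gx b a0" "2 \<le> ndeg Gx b" "2 \<le> ndeg Gx a0"
  shows False
proof -
  obtain c where c: "Gx b c" "c \<noteq> a0" using other_neighbour_if_ndeg_ge_2[OF assms(3)] by blast
  have "Gx a0 b" using assms(2) symp_Gx by (auto dest: sympD)
  then obtain z where "quad_form scaled_weight z < 1 * sum_sq z"
    by (rule scaled_weight_form_below_sum_sq[OF _ c assms(4)])
  then obtain w lam where "\<exists>e. w e \<noteq> 0" "lam < 1"
    "\<And>e. (\<Sum>f\<in>UNIV. scaled_weight e f * w f) = lam * w e"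
    using eigenvalue_below_if_quad_form_below[of scaled_weight, OF scaled_weight_sym] by blast
  then have "jac_eigenvalue adj a p x (complex_of_real (H * (1 - lam)))"
    by (intro jac_eigenvalue_if_scaled_weight_eigenvector) auto
  then have "H * (1 - lam) \<le> 0" using stable by force
  then show False using Hfun_pos \<open>lam < 1\<close> by (simp add: mult_le_0_iff)
qed

lemma ap_leaf_edge:
  assumes "x u w > 0" "{m. Gx w m} = {u}"
  shows "ap u w = H * xv u"
proof -
  have "xv w = x u w" using xv_leaf[OF assms(2)] x_sym by simp
  then show ?thesis using ap_equilibrium[OF assms(1)] assms(1) by simp
qed

lemma ap_hub_edge:
  assumes hub: "unique_hub Gx" "2 \<le> ndeg Gx u" and u: "u \<in> {i, j}" and x_ij: "x i j > 0"
  shows "ap i j = H * xv u"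
proof -
  obtain w where uw: "x u w > 0" "ap i j = ap u w" "w \<in> {i, j}"
  proof (cases "u = i")
    case True
    then show ?thesis using that[of j] x_ij by simp
  next
    case False
    then have "u = j" using u by simp
    then show ?thesis using that[of i] x_ij x_sym[of i j] ap_sym[of i j] by simp
  qed
  then have "u \<noteq> w" using x_diag by auto
  then have "ndeg Gx w \<le> 1"
    using unique_hub_edge_has_leaf[OF hub(1)] hub(2) uw(1) by (force simp: Gx_iff)
  moreover have "Gx w u" using uw(1) x_sym[of u w] by (simp add: Gx_iff)
  ultimately have "{m. Gx w m} = {u}" by (rule neighbours_if_ndeg_le_1)
  then show ?thesis using ap_leaf_edge uw(1,2) by simp
qed

lemma propP_if_unique_hub:
  assumes hub: "unique_hub Gx"
  shows "propP adj a p Gx"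
  unfolding propP_def
proof (intro conjI allI impI)
  fix i j k l assume ij: "Gx i j" and kl: "Gx k l" and ik: "Gx\<^sup>*\<^sup>* i k"
  show "0 < ap i j" using ap_pos_if_x_pos ij by (simp add: Gx_iff)
  from unique_hub_edges_in_component[OF symp_Gx irreflp_Gx hub ij kl ik]
  show "ap i j = ap k l"
  proof
    assume "{k, l} = {i, j}"
    then show ?thesis using ap_sym by (auto simp: doubleton_eq_iff)
  next
    assume "\<exists>u\<in>{i, j} \<inter> {k, l}. 2 \<le> ndeg Gx u"
    then show ?thesis using ap_hub_edge[OF hub] ij kl by (auto simp: Gx_iff)
  qed
next
  show "\<And>i k. Gx\<^sup>*\<^sup>* i k \<Longrightarrow> 2 \<le> ndeg Gx i \<Longrightarrow> 2 \<le> ndeg Gx k \<Longrightarrow> i = k"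
    using hub unfolding unique_hub_def by blast
next
  fix i
  show "(\<exists>j. Gx i j) \<longleftrightarrow> (\<exists>j. adj i j \<and> 0 < ap i j)"
  proof
    assume "\<exists>j. Gx i j"
    then obtain j where "x i j > 0" by (auto simp: Gx_iff)
    then show "\<exists>j. adj i j \<and> 0 < ap i j" using ap_pos_if_x_pos adj_if_x_pos by blast
  next
    assume "\<exists>j. adj i j \<and> 0 < ap i j"
    then have "(\<Sum>j\<in>{j. ap i j > 0}. x i j) \<noteq> 0"
      using x_not_bdry x_Delta unfolding bdry_def by blast
    then obtain j where "x i j \<noteq> 0" by (meson sum.neutral)
    then show "\<exists>j. Gx i j" using x_pos_iff by (auto simp: Gx_iff)
  qed
qed

lemma stable_eq_iff_unique_hub: "stable_eq adj a p h1 x \<longleftrightarrow> unique_hub Gx"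
proof
  assume "stable_eq adj a p h1 x"
  then have "Re mu \<le> 0" if "jac_eigenvalue adj a p x mu" for mu
    using that unfolding stable_eq_def by blast
  then show "unique_hub Gx"
    using unique_hub_if_no_adjacent_hubs[OF symp_Gx] no_adjacent_hubs_if_stable by blast
next
  assume "unique_hub Gx"
  then show "stable_eq adj a p h1 x"
    unfolding stable_eq_def using x_Gamma x_not_bdry eigenvalue_nonpos_if_unique_hub by blast
qed

context
  fixes N
  assumes hub: "unique_hub Gx" and nuc: "is_nuclei Gx N"
begin

lemma ap_nuc_nucleus:
  assumes n: "n \<in> N"
  shows "ap_nuc a p Gx n = H * xv n"
proof (cases "\<exists>k. Gx n k")
  case True
  define k where "k = (SOME k. Gx n k)"
  have k: "Gx n k" unfolding k_def using someI_ex[OF True] .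
  have "n \<noteq> k" using k irreflp_Gx by (auto dest: irreflpD)
  then have "ndeg Gx k \<le> 1"
    using nucleus_of_edge[OF symp_Gx irreflp_Gx hub nuc k n rtranclp.rtrancl_refl] by blast
  moreover have "Gx k n" using k symp_Gx by (auto dest: sympD)
  ultimately have "{m. Gx k m} = {n}" by (rule neighbours_if_ndeg_le_1)
  then have "ap n k = H * xv n" using ap_leaf_edge k by (simp add: Gx_iff)
  then show ?thesis unfolding ap_nuc_def using True k_def by simp
next
  case False
  then have "xv n = 0" by (simp add: xv_eq Gx_iff x_pos_iff)
  moreover have "ap_nuc a p Gx n = 0" unfolding ap_nuc_def by (subst if_not_P[OF False]) simp
  ultimately show ?thesis by simp
qed

lemma nuclei_split_edges:
  assumes "x i j > 0"
  shows "i \<in> N \<longleftrightarrow> j \<notin> N"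
proof -
  have ij: "Gx i j" using assms by (simp add: Gx_iff)
  obtain n where n: "n \<in> N" "Gx\<^sup>*\<^sup>* i n" using nuc unfolding is_nuclei_def by blast
  have "n = i \<or> n = j"
    using nucleus_of_edge[OF symp_Gx irreflp_Gx hub nuc ij n] by blast
  moreover have "i = j" if "i \<in> N" "j \<in> N"
  proof -
    have "\<exists>!n. n \<in> N \<and> Gx\<^sup>*\<^sup>* i n" using nuc unfolding is_nuclei_def by blast
    moreover have "i \<in> N \<and> Gx\<^sup>*\<^sup>* i i" "j \<in> N \<and> Gx\<^sup>*\<^sup>* i j" using that ij by auto
    ultimately show "i = j" by blast
  qed
  ultimately show ?thesis using n(1) ij irreflp_Gx by (auto dest: irreflpD)
qed

end

lemma GammaG_if_propP:
  assumes P: "propP adj a p Gx" and nuc: "is_nuclei Gx N"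
  shows "x \<in> GammaG adj a p h1 Gx N"
proof -
  note hub = unique_hub_if_propP[OF P]
  have "(\<Sum>n\<in>N. ap_nuc a p Gx n) = H * (\<Sum>n\<in>N. xv n)"
    using ap_nuc_nucleus[OF hub nuc] by (simp add: sum_distrib_left)
  also have "\<dots> = H / 2"
    using sum_xv_half_if_bipartite nuclei_split_edges[OF hub nuc] by simp
  finally have two: "2 * (\<Sum>n\<in>N. ap_nuc a p Gx n) = H" by simp
  show ?thesis
    unfolding GammaG_def
  proof (intro CollectI conjI ballI allI impI x_Delta refl)
    fix n assume "n \<in> N"
    then show "xv n = ap_nuc a p Gx n / (2 * (\<Sum>n\<in>N. ap_nuc a p Gx n))"
      unfolding two using ap_nuc_nucleus[OF hub nuc] Hfun_pos by simp
  next
    fix i j assume "Gx i j"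
    then show "x i j > 0" by (simp add: Gx_iff)
  next
    fix i
    show "(\<Sum>j\<in>{j. Gx i j}. x i j) = xv i"
      unfolding xv_eq Gx_iff by (rule sum.mono_neutral_left) (auto simp: x_pos_iff)
  qed
qed

end

context interior_point begin

lemma stable_eq_iff_Gamma_propP:
  "stable_eq adj a p h1 x \<longleftrightarrow> x \<in> Gamma adj a p h1 \<and> propP adj a p Gx"
proof (cases "x \<in> Gamma adj a p h1")
  case True
  then interpret interior_equilibrium adj a p x h1 by unfold_locales
  show ?thesis
    using stable_eq_iff_unique_hub propP_if_unique_hub unique_hub_if_propP True by blast
qed (simp add: stable_eq_def)

lemma Gamma_propP_iff_GammaG:
  "x \<in> Gamma adj a p h1 \<and> propP adj a p Gx \<longleftrightarrow>
     (\<exists>S N. subgraph adj S \<and> propP adj a p S \<and> is_nuclei S N \<and> x \<in> GammaG adj a p h1 S N)"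
proof
  assume x: "x \<in> Gamma adj a p h1 \<and> propP adj a p Gx"
  then interpret interior_equilibrium adj a p x h1 by unfold_locales blast
  obtain N where "is_nuclei Gx N" using nuclei_exist[OF symp_Gx] by blast
  then show "\<exists>S N. subgraph adj S \<and> propP adj a p S \<and> is_nuclei S N \<and> x \<in> GammaG adj a p h1 S N"
    using x subgraph_Gx GammaG_if_propP by blast
qed (use Gamma_propP_if_GammaG in blast)

end

theorem proposition1:
  fixes adj :: "'v::finite \<Rightarrow> 'v \<Rightarrow> bool"
    and a p x :: "'v \<Rightarrow> 'v \<Rightarrow> real" and h1 :: real
  assumes adj_sym: "\<And>i j. adj i j \<Longrightarrow> adj j i"
    and adj_irrefl: "\<And>i. \<not> adj i i"
    and a_sym: "\<And>i j. a i j = a j i" and a_nonneg: "\<And>i j. a i j \<ge> 0"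
    and a_adj: "\<And>i j. a i j > 0 \<Longrightarrow> adj i j"
    and p_sym: "\<And>i j. p i j = p j i" and p_range: "\<And>i j. 0 \<le> p i j \<and> p i j \<le> 1"
    and p_adj: "\<And>i j. \<not> adj i j \<Longrightarrow> p i j = 0"
    and ap_pos: "\<exists>i j. a i j * p i j > 0"
    and h1: "0 < h1" "h1 \<le> 1"
    and x: "x \<in> Delta adj a p h1 - bdry adj a p h1"
  shows "(stable_eq adj a p h1 x \<longleftrightarrow>
            x \<in> Gamma adj a p h1 \<and> propP adj a p (graph_of x))
       \<and> (x \<in> Gamma adj a p h1 \<and> propP adj a p (graph_of x) \<longleftrightarrow>
            (\<exists>S N. subgraph adj S \<and> propP adj a p S \<and> is_nuclei S N \<and>
                   x \<in> GammaG adj a p h1 S N))"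
proof -
  interpret interior_point adj a p x h1
    using adj_sym adj_irrefl a_sym a_nonneg p_sym p_range p_adj h1 x by unfold_locales auto
  show ?thesis using stable_eq_iff_Gamma_propP Gamma_propP_iff_GammaG by blast
qed

end
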